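(* Let $C$ be a basic $k$-coalgebra and $A,B$ subcoalgebras of $C$. (a) A complete set of pairwise non-isomorphic simple right $A\wedge^C B$-comodules is the union of a complete set of simple right $A$-comodules and a complete set of simple right $B$-comodules; i.e. every simple subcoalgebra of $A\wedge^C B$ lies in $A$ or in $B$. (b) For simple subcoalgebras $S,T$ of $A\wedge^C B$: $S\wedge^{A\wedge^C B}T=S\oplus T$ if $S\not\subseteq A$ and $T\not\subseteq B$; $S\wedge^{A\wedge^C B}T=S\wedge^C T$ if $S\subseteq A$ and $T\subseteq B$; $S\wedge^{A\wedge^C B}T=S\wedge^A T$ if $S\subseteq A$ and $T\not\subseteq B$; $S\wedge^{A\wedge^C B}T=S\wedge^B T$ if $S\not\subseteq A$ and $T\subseteq B$. *)

theory Defs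
  imports Main
begin

text \<open>A k-coalgebra is presented via a (Hamel) basis indexed by a type 'b:
  elements are finitely supported functions 'b => 'k; the tensor square is
  represented by finitely supported functions on 'b * 'b.  The comultiplication
  is given by structure constants c i j l  (Delta e_i = sum c i j l e_j (x) e_l),
  the counit by u i = eps e_i.\<close>

definition fsupp :: "('i \<Rightarrow> 'k::zero) \<Rightarrow> bool" where
  "fsupp f \<longleftrightarrow> finite {i. f i \<noteq> 0}"

definition Cset :: "('b \<Rightarrow> 'k::zero) set" where
  "Cset = {x. fsupp x}"

definition zerov :: "'i \<Rightarrow> 'k::zero" where
  "zerov = (\<lambda>_. 0)"

definition lin_subspace :: "('i \<Rightarrow> 'k::field) set \<Rightarrow> bool" where
  "lin_subspace V \<longleftrightarrow> zerov \<in> V \<and> (\<forall>x\<in>V. \<forall>y\<in>V. (\<lambda>i. x i + y i) \<in> V)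
     \<and> (\<forall>a. \<forall>x\<in>V. (\<lambda>i. a * x i) \<in> V)"

definition lin_span :: "('i \<Rightarrow> 'k::field) set \<Rightarrow> ('i \<Rightarrow> 'k) set" where
  "lin_span S = \<Inter>{V. lin_subspace V \<and> S \<subseteq> V}"

definition ssum :: "('i \<Rightarrow> 'k::field) set \<Rightarrow> ('i \<Rightarrow> 'k) set \<Rightarrow> ('i \<Rightarrow> 'k) set" where
  "ssum X Y = {(\<lambda>i. x i + y i) | x y. x \<in> X \<and> y \<in> Y}"

definition tens :: "('b \<Rightarrow> 'k::field) set \<Rightarrow> ('b \<Rightarrow> 'k) set \<Rightarrow> ('b \<times> 'b \<Rightarrow> 'k) set" where
  "tens X Y = lin_span {(\<lambda>(j, l). x j * y l) | x y. x \<in> X \<and> y \<in> Y}"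

definition row :: "('b \<Rightarrow> 'b \<Rightarrow> 'b \<Rightarrow> 'k::zero) \<Rightarrow> 'b \<Rightarrow> 'b set" where
  "row c i = {m. \<exists>j. c i m j \<noteq> 0 \<or> c i j m \<noteq> 0}"

definition coalg :: "('b \<Rightarrow> 'b \<Rightarrow> 'b \<Rightarrow> 'k::field) \<Rightarrow> ('b \<Rightarrow> 'k) \<Rightarrow> bool" where
  "coalg c u \<longleftrightarrow>
     (\<forall>i. finite (row c i)) \<and>
     (\<forall>i j k l. (\<Sum>m\<in>row c i. c i m l * c m j k) = (\<Sum>m\<in>row c i. c i j m * c m k l)) \<and>
     (\<forall>i l. (\<Sum>j\<in>row c i. u j * c i j l) = (if l = i then 1 else 0)) \<and>
     (\<forall>i j. (\<Sum>l\<in>row c i. c i j l * u l) = (if j = i then 1 else 0))"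

definition delta :: "('b \<Rightarrow> 'b \<Rightarrow> 'b \<Rightarrow> 'k::field) \<Rightarrow> ('b \<Rightarrow> 'k) \<Rightarrow> ('b \<times> 'b \<Rightarrow> 'k)" where
  "delta c x = (\<lambda>(j, l). \<Sum>i\<in>{i. x i \<noteq> 0}. x i * c i j l)"

definition subcoalg :: "('b \<Rightarrow> 'b \<Rightarrow> 'b \<Rightarrow> 'k::field) \<Rightarrow> ('b \<Rightarrow> 'k) set \<Rightarrow> bool" where
  "subcoalg c D \<longleftrightarrow> lin_subspace D \<and> D \<subseteq> Cset \<and> (\<forall>x\<in>D. delta c x \<in> tens D D)"

text \<open>wedge of X and Y inside the subcoalgebra D (D = Cset gives the wedge in C):
  {x in D. Delta x in X (x) D + D (x) Y}\<close>
definition wedge :: "('b \<Rightarrow> 'b \<Rightarrow> 'b \<Rightarrow> 'k::field) \<Rightarrow> ('b \<Rightarrow> 'k) set \<Rightarrow> ('b \<Rightarrow> 'k) set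
    \<Rightarrow> ('b \<Rightarrow> 'k) set \<Rightarrow> ('b \<Rightarrow> 'k) set" where
  "wedge c D X Y = {x \<in> D. delta c x \<in> ssum (tens X D) (tens D Y)}"

definition simple_subcoalg :: "('b \<Rightarrow> 'b \<Rightarrow> 'b \<Rightarrow> 'k::field) \<Rightarrow> ('b \<Rightarrow> 'k) set \<Rightarrow> bool" where
  "simple_subcoalg c S \<longleftrightarrow> subcoalg c S \<and> S \<noteq> {zerov} \<and>
     (\<forall>T. subcoalg c T \<and> T \<subseteq> S \<longrightarrow> T = {zerov} \<or> T = S)"

text \<open>basic: each simple subcoalgebra S is simple as a right S-comodule
  (i.e. has no nonzero proper right coideal), equivalently soc(C_C) is a direct
  sum of pairwise non-isomorphic simple comodules.\<close>
definition basic :: "('b \<Rightarrow> 'b \<Rightarrow> 'b \<Rightarrow> 'k::field) \<Rightarrow> bool" where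
  "basic c \<longleftrightarrow> (\<forall>S. simple_subcoalg c S \<longrightarrow>
     (\<forall>V. lin_subspace V \<and> V \<subseteq> S \<and> (\<forall>x\<in>V. delta c x \<in> tens V Cset) \<longrightarrow> V = {zerov} \<or> V = S))"

end

theory Submission
  imports Defs "HOL.Vector_Spaces" "HOL-Library.Function_Algebras"
begin

(* Write C for the space of finitely supported functions on the
   basis, V \<otimes> W for the span of the elementary tensors x \<otimes> y, and for a
   functional p (an arbitrary function on the basis, acting on C by pairing)
   write (id \<otimes> p) and (p \<otimes> id) for the two contractions C \<otimes> C \<rightarrow> C.

   The one linear-algebra tool is an annihilator criterion
   (tens_annihilator_criterion): a tensor t \<in> U \<otimes> V lies in
   (X \<inter> U) \<otimes> V + U \<otimes> (Y \<inter> V) as soon as (id \<otimes> p) t \<in> X for every p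
   annihilating Y.  It is proved by induction on the length of a representation
   t = \<Sum> u_a \<otimes> v_a: a v_a depending linearly on Y and the other v_b is
   eliminated, and for independent v_a a separating functional isolates u_a.
   On the coalgebra side we need the counit laws and two forms of
   coassociativity, phrased through contractions and the convolution of
   functionals; left-handed statements come from right-handed ones in the
   opposite coalgebra.  The paper's arguments then become short: subcoalgebras
   are closed under intersection, so a simple subcoalgebra meets any
   subcoalgebra trivially or lies inside it; the wedge D = A \<and> B is a
   subcoalgebra containing A and B (locale coalg_pair); and each part of the
   theorem follows by feeding the defining property of the relevant wedge into
   the annihilator criterion and applying a counit law. *)

section \<open>Linear algebra of finitely supported functions\<close>

lemma zerov_apply [simp]: "zerov i = 0"
  by (simp add: zerov_def)

lemma Cset_iff: "x \<in> Cset \<longleftrightarrow> finite {i. x i \<noteq> 0}"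
  by (simp add: Cset_def fsupp_def)

lemma lsub_zero: "lin_subspace V \<Longrightarrow> zerov \<in> V"
  by (simp add: lin_subspace_def)

lemma lsub_add: "lin_subspace V \<Longrightarrow> x \<in> V \<Longrightarrow> y \<in> V \<Longrightarrow> (\<lambda>i. x i + y i) \<in> V"
  by (simp add: lin_subspace_def)

lemma lsub_scale: "lin_subspace V \<Longrightarrow> x \<in> V \<Longrightarrow> (\<lambda>i. a * x i) \<in> V"
  by (simp add: lin_subspace_def)

lemma lsub_neg: "lin_subspace V \<Longrightarrow> x \<in> V \<Longrightarrow> (\<lambda>i. - x i) \<in> V"
  using lsub_scale[of V x "-1"] by simp

lemma lsub_diff: "lin_subspace V \<Longrightarrow> x \<in> V \<Longrightarrow> y \<in> V \<Longrightarrow> (\<lambda>i. x i - y i) \<in> V"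
  using lsub_add[OF _ _ lsub_neg, of V x y] by simp

lemma fun_sum_apply: "(\<Sum>a\<in>I. f a) i = (\<Sum>a\<in>I. f a i)"
  by (induction I rule: infinite_finite_induct) (auto simp: plus_fun_def zero_fun_def)

lemma lsub_sum:
  assumes "lin_subspace V" "finite I" "\<And>a. a \<in> I \<Longrightarrow> f a \<in> V"
  shows "(\<lambda>i. \<Sum>a\<in>I. f a i) \<in> V"
  using assms(2,3)
proof (induction I rule: finite_induct)
  case empty
  then show ?case using lsub_zero[OF assms(1)] by (simp add: zerov_def)
next
  case (insert a I)
  then show ?case using lsub_add[OF assms(1), of "f a" "\<lambda>i. \<Sum>a\<in>I. f a i"] by simp
qed

lemma lsub_Int: "lin_subspace X \<Longrightarrow> lin_subspace Y \<Longrightarrow> lin_subspace (X \<inter> Y)"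
  by (simp add: lin_subspace_def)

lemma lsub_Cset: "lin_subspace (Cset :: ('b \<Rightarrow> 'k::field) set)"
proof -
  have "{i. x i + y i \<noteq> 0} \<subseteq> {i. x i \<noteq> 0} \<union> {i. y i \<noteq> (0::'k)}" for x y :: "'b \<Rightarrow> 'k"
    by auto
  moreover have "{i. a * x i \<noteq> 0} \<subseteq> {i. x i \<noteq> (0::'k)}" for a and x :: "'b \<Rightarrow> 'k"
    by auto
  ultimately show ?thesis
    unfolding lin_subspace_def Cset_def fsupp_def zerov_def by (auto intro: finite_subset)
qed

lemma lsub_zero_space: "lin_subspace {zerov}"
  by (auto simp: lin_subspace_def zerov_def)

lemma zero_Int: "lin_subspace V \<Longrightarrow> {zerov} \<inter> V = {zerov}"
  using lsub_zero by blast

lemma lsub_lin_span: "lin_subspace (lin_span S)"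
  unfolding lin_span_def lin_subspace_def by blast

lemma lin_span_superset: "S \<subseteq> lin_span S"
  unfolding lin_span_def by blast

lemma lin_span_minimal: "lin_subspace V \<Longrightarrow> S \<subseteq> V \<Longrightarrow> lin_span S \<subseteq> V"
  unfolding lin_span_def by blast

lemma lin_span_insert_family:
  assumes "lin_subspace Y" "finite J"
  shows "lin_span (Y \<union> v ` J) \<subseteq> {\<lambda>i. y i + (\<Sum>b\<in>J. \<mu> b * v b i) | y \<mu>. y \<in> Y}"
    (is "_ \<subseteq> ?R")
proof (rule lin_span_minimal)
  show "lin_subspace ?R" unfolding lin_subspace_def
  proof (intro conjI ballI allI)
    show "zerov \<in> ?R" using lsub_zero[OF assms(1)]
      by (intro CollectI exI[of _ zerov] exI[of _ "\<lambda>_. 0"]) (auto simp: zerov_def)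
  next
    fix x z assume "x \<in> ?R" "z \<in> ?R"
    then obtain y1 m1 y2 m2 where "y1 \<in> Y" "x = (\<lambda>i. y1 i + (\<Sum>b\<in>J. m1 b * v b i))"
      "y2 \<in> Y" "z = (\<lambda>i. y2 i + (\<Sum>b\<in>J. m2 b * v b i))" by blast
    then show "(\<lambda>i. x i + z i) \<in> ?R" using lsub_add[OF assms(1)]
      by (intro CollectI exI[of _ "\<lambda>i. y1 i + y2 i"] exI[of _ "\<lambda>b. m1 b + m2 b"])
        (auto simp: fun_eq_iff sum.distrib algebra_simps)
  next
    fix a x assume "x \<in> ?R"
    then obtain y1 m1 where "y1 \<in> Y" "x = (\<lambda>i. y1 i + (\<Sum>b\<in>J. m1 b * v b i))" by blast
    then show "(\<lambda>i. a * x i) \<in> ?R" using lsub_scale[OF assms(1)]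
      by (intro CollectI exI[of _ "\<lambda>i. a * y1 i"] exI[of _ "\<lambda>b. a * m1 b"])
        (auto simp: fun_eq_iff sum_distrib_left algebra_simps)
  qed
  have "v b \<in> ?R" if "b \<in> J" for b
  proof -
    have "(\<Sum>c\<in>J. (if c = b then 1 else 0) * v c i) = v b i" for i
      using that assms(2) by (simp add: if_distrib[of "\<lambda>x. x * _"] sum.delta cong: if_cong)
    then show ?thesis using lsub_zero[OF assms(1)]
      by (intro CollectI exI[of _ zerov] exI[of _ "\<lambda>c. if c = b then 1 else 0"]) (auto simp: fun_eq_iff)
  qed
  moreover have "y \<in> ?R" if "y \<in> Y" for y
    using that by (intro CollectI exI[of _ y] exI[of _ "\<lambda>_. 0"]) auto
  ultimately show "Y \<union> v ` J \<subseteq> ?R" by blast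
qed

lemma ssumI: "x \<in> X \<Longrightarrow> y \<in> Y \<Longrightarrow> (\<lambda>i. x i + y i) \<in> ssum X Y"
  unfolding ssum_def by blast

lemma ssumE:
  "z \<in> ssum X Y \<Longrightarrow> (\<And>x y. x \<in> X \<Longrightarrow> y \<in> Y \<Longrightarrow> z = (\<lambda>i. x i + y i) \<Longrightarrow> P) \<Longrightarrow> P"
  unfolding ssum_def by blast

lemma lsub_ssum:
  assumes X: "lin_subspace X" and Y: "lin_subspace Y"
  shows "lin_subspace (ssum X Y)"
  unfolding lin_subspace_def
proof (intro conjI ballI allI)
  show "zerov \<in> ssum X Y"
    using ssumI[OF lsub_zero[OF X] lsub_zero[OF Y]] by (simp add: zerov_def)
next
  fix x y assume "x \<in> ssum X Y" "y \<in> ssum X Y"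
  then obtain x1 x2 y1 y2 where "x = (\<lambda>i. x1 i + x2 i)" "y = (\<lambda>i. y1 i + y2 i)"
    "x1 \<in> X" "x2 \<in> Y" "y1 \<in> X" "y2 \<in> Y" by (elim ssumE) blast
  then show "(\<lambda>i. x i + y i) \<in> ssum X Y"
    using ssumI[OF lsub_add[OF X, of x1 y1] lsub_add[OF Y, of x2 y2]]
    by (simp add: algebra_simps)
next
  fix a x assume "x \<in> ssum X Y"
  then obtain x1 x2 where "x = (\<lambda>i. x1 i + x2 i)" "x1 \<in> X" "x2 \<in> Y" by (rule ssumE)
  then show "(\<lambda>i. a * x i) \<in> ssum X Y"
    using ssumI[OF lsub_scale[OF X, of x1 a] lsub_scale[OF Y, of x2 a]]
    by (simp add: algebra_simps)
qed

lemma ssum_contains_left: "zerov \<in> Y \<Longrightarrow> X \<subseteq> ssum X Y"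
  using ssumI[of _ X zerov Y] by auto

lemma ssum_contains_right: "zerov \<in> X \<Longrightarrow> Y \<subseteq> ssum X Y"
  using ssumI[of zerov X _ Y] by auto

lemma ssum_mono: "X \<subseteq> X' \<Longrightarrow> Y \<subseteq> Y' \<Longrightarrow> ssum X Y \<subseteq> ssum X' Y'"
  unfolding ssum_def by blast

lemma ssum_commute: "ssum X Y = ssum Y X"
  unfolding ssum_def by (auto; metis (no_types) add.commute)

lemma ssum_zero_right: "lin_subspace X \<Longrightarrow> ssum X {zerov} = X"
  by (auto elim!: ssumE intro: ssum_contains_left[THEN subsetD])

lemma ssum_zero_left: "lin_subspace X \<Longrightarrow> ssum {zerov} X = X"
  using ssum_zero_right ssum_commute by metis

text \<open>An arbitrary function p on the basis acts as a linear functional on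
  finitely supported vectors; annihilates p Y says that it vanishes on Y.\<close>

definition pairing :: "('b \<Rightarrow> 'k::field) \<Rightarrow> ('b \<Rightarrow> 'k) \<Rightarrow> 'k" where
  "pairing p y = (\<Sum>l\<in>{l. y l \<noteq> 0}. p l * y l)"

definition annihilates :: "('b \<Rightarrow> 'k::field) \<Rightarrow> ('b \<Rightarrow> 'k) set \<Rightarrow> bool" where
  "annihilates p Y \<longleftrightarrow> (\<forall>y\<in>Y. pairing p y = 0)"

definition unit_vec :: "'b \<Rightarrow> 'b \<Rightarrow> 'k::field" where
  "unit_vec m = (\<lambda>i. if i = m then 1 else 0)"

lemma pairing_eq:
  assumes "finite F" "{l. y l \<noteq> 0} \<subseteq> F"
  shows "pairing p y = (\<Sum>l\<in>F. p l * y l)"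
  unfolding pairing_def using assms by (intro sum.mono_neutral_left) auto

lemma pairing_zero [simp]: "pairing p (\<lambda>_. 0) = 0"
  by (simp add: pairing_def)

lemma pairing_linear_combination:
  assumes "finite I" "\<And>a. a \<in> I \<Longrightarrow> v a \<in> Cset"
  shows "pairing p (\<lambda>l. \<Sum>a\<in>I. w a * v a l) = (\<Sum>a\<in>I. w a * pairing p (v a))"
proof -
  define F where "F = (\<Union>a\<in>I. {l. v a l \<noteq> 0})"
  have fin: "finite F" unfolding F_def using assms by (auto simp: Cset_iff)
  have supp: "{l. (\<Sum>a\<in>I. w a * v a l) \<noteq> 0} \<subseteq> F"
    by (auto simp: F_def dest: sum.not_neutral_contains_not_neutral)
  have "pairing p (\<lambda>l. \<Sum>a\<in>I. w a * v a l) = (\<Sum>l\<in>F. \<Sum>a\<in>I. w a * (p l * v a l))"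
    by (simp add: pairing_eq[OF fin supp] sum_distrib_left mult.left_commute)
  also have "\<dots> = (\<Sum>a\<in>I. w a * (\<Sum>l\<in>F. p l * v a l))"
    by (subst sum.swap) (simp add: sum_distrib_left)
  also have "\<dots> = (\<Sum>a\<in>I. w a * pairing p (v a))"
    by (intro sum.cong refl arg_cong2[where f="(*)"] pairing_eq[symmetric] fin) (auto simp: F_def)
  finally show ?thesis .
qed

lemma pairing_add: "x \<in> Cset \<Longrightarrow> y \<in> Cset \<Longrightarrow> pairing p (\<lambda>l. x l + y l) = pairing p x + pairing p y"
  using pairing_linear_combination[of "{True, False}" "\<lambda>a. if a then x else y" p "\<lambda>_. 1"] by simp

lemma pairing_scale: "x \<in> Cset \<Longrightarrow> pairing p (\<lambda>l. a * x l) = a * pairing p x"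
  using pairing_linear_combination[of "{True}" "\<lambda>_. x" p "\<lambda>_. a"] by simp

text \<open>To obtain separating functionals we view the functions on the basis as a
  vector space in the sense of the library and extend a basis of the subspace.\<close>

definition fscale :: "'k::field \<Rightarrow> ('b \<Rightarrow> 'k) \<Rightarrow> ('b \<Rightarrow> 'k)" where
  "fscale a f = (\<lambda>i. a * f i)"

lemma vector_space_pair_fscale:
  "vector_space_pair (fscale :: 'k::field \<Rightarrow> ('b \<Rightarrow> 'k) \<Rightarrow> ('b \<Rightarrow> 'k)) ((*) :: 'k \<Rightarrow> 'k \<Rightarrow> 'k)"
  unfolding vector_space_pair_def
  by (intro conjI; unfold_locales) (auto simp: fscale_def fun_eq_iff algebra_simps)

lemma separating_linear_functional:
  fixes W :: "('b \<Rightarrow> 'k::field) set"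
  assumes "lin_subspace W" "v \<notin> W"
  shows "\<exists>\<phi>. Vector_Spaces.linear fscale ((*) :: 'k \<Rightarrow> 'k \<Rightarrow> 'k) \<phi> \<and> (\<forall>w\<in>W. \<phi> w = 0) \<and> \<phi> v = 1"
proof -
  interpret P: vector_space_pair "fscale :: 'k \<Rightarrow> ('b \<Rightarrow> 'k) \<Rightarrow> ('b \<Rightarrow> 'k)" "(*) :: 'k \<Rightarrow> 'k \<Rightarrow> 'k"
    by (rule vector_space_pair_fscale)
  have "P.vs1.subspace W"
    using assms(1) unfolding P.vs1.subspace_def lin_subspace_def zerov_def
    by (auto simp: zero_fun_def plus_fun_def fscale_def)
  then obtain B where B: "B \<subseteq> W" "P.vs1.independent B" "P.vs1.span B = W"
    by (metis P.vs1.basis_exists P.vs1.span_minimal P.vs1.span_mono subset_antisym)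
  have vB: "v \<notin> P.vs1.span B" using B(3) assms(2) by simp
  have ind: "P.vs1.independent (insert v B)" by (rule P.vs1.independent_insertI[OF vB B(2)])
  define \<phi> where "\<phi> = P.construct (insert v B) (\<lambda>b. if b = v then 1 else 0)"
  have lin: "Vector_Spaces.linear fscale (*) \<phi>"
    unfolding \<phi>_def by (rule P.linear_construct[OF ind])
  have "\<phi> b = (if b = v then 1 else 0)" if "b \<in> insert v B" for b
    unfolding \<phi>_def using P.construct_basis[OF ind that] by simp
  moreover have "v \<notin> B" using vB P.vs1.span_superset by blast
  ultimately have v1: "\<phi> v = 1" and b0: "\<And>b. b \<in> B \<Longrightarrow> \<phi> b = 0" by auto
  have "\<phi> w = 0" if "w \<in> P.vs1.span B" for w
    using P.linear_eq_on[OF lin P.linear_zero that] b0 by simp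
  then show ?thesis using lin v1 B(3) by auto
qed

lemma separating_functional:
  fixes W :: "('b \<Rightarrow> 'k::field) set"
  assumes "lin_subspace W" "v \<notin> W" "v \<in> Cset"
  shows "\<exists>p. (\<forall>w\<in>W \<inter> Cset. pairing p w = 0) \<and> pairing p v = 1"
proof -
  interpret P: vector_space_pair "fscale :: 'k \<Rightarrow> ('b \<Rightarrow> 'k) \<Rightarrow> ('b \<Rightarrow> 'k)" "(*) :: 'k \<Rightarrow> 'k \<Rightarrow> 'k"
    by (rule vector_space_pair_fscale)
  obtain \<phi> where lin: "Vector_Spaces.linear fscale ((*) :: 'k \<Rightarrow> 'k \<Rightarrow> 'k) \<phi>"
    and W0: "\<forall>w\<in>W. \<phi> w = 0" and v1: "\<phi> v = 1"
    using separating_linear_functional[OF assms(1,2)] by blast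
  have coeffs: "\<phi> y = pairing (\<lambda>l. \<phi> (unit_vec l)) y" if "y \<in> Cset" for y :: "'b \<Rightarrow> 'k"
  proof -
    let ?F = "{l. y l \<noteq> 0}"
    have fin: "finite ?F" using that by (simp add: Cset_iff)
    have "y = (\<Sum>l\<in>?F. fscale (y l) (unit_vec l))"
      by (auto simp: fun_eq_iff fun_sum_apply fscale_def unit_vec_def fin if_distrib cong: if_cong)
    then have "\<phi> y = \<phi> (\<Sum>l\<in>?F. fscale (y l) (unit_vec l))" by simp
    also have "\<dots> = (\<Sum>l\<in>?F. y l * \<phi> (unit_vec l))"
      by (simp add: P.linear_sum[OF lin] P.linear_scale[OF lin])
    finally show ?thesis by (simp add: pairing_def mult.commute)
  qed
  show ?thesis using coeffs W0 v1 assms(3) by (intro exI[of _ "\<lambda>l. \<phi> (unit_vec l)"]) auto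
qed

section \<open>Tensors and contractions\<close>

definition tprod :: "('b \<Rightarrow> 'k::field) \<Rightarrow> ('b \<Rightarrow> 'k) \<Rightarrow> ('b \<times> 'b \<Rightarrow> 'k)" where
  "tprod x y = (\<lambda>(j, l). x j * y l)"

definition tensor_sum :: "'i set \<Rightarrow> ('i \<Rightarrow> 'b \<Rightarrow> 'k::field) \<Rightarrow> ('i \<Rightarrow> 'b \<Rightarrow> 'k) \<Rightarrow> ('b \<times> 'b \<Rightarrow> 'k)" where
  "tensor_sum I u v = (\<lambda>(j, l). \<Sum>a\<in>I. u a j * v a l)"

lemma lsub_tens: "lin_subspace (tens X Y)"
  unfolding tens_def by (rule lsub_lin_span)

lemma tprod_tens: "x \<in> X \<Longrightarrow> y \<in> Y \<Longrightarrow> tprod x y \<in> tens X Y"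
  unfolding tens_def tprod_def by (rule lin_span_superset[THEN subsetD]) (use nothing in blast)

lemma tens_mono: "X \<subseteq> X' \<Longrightarrow> Y \<subseteq> Y' \<Longrightarrow> tens X Y \<subseteq> tens X' Y'"
  unfolding tens_def[of X Y]
  by (rule lin_span_minimal[OF lsub_tens]) (auto intro: tprod_tens[unfolded tprod_def])

lemma tensor_sum_tens:
  assumes "finite I" "\<And>a. a \<in> I \<Longrightarrow> u a \<in> X \<and> v a \<in> Y"
  shows "tensor_sum I u v \<in> tens X Y"
proof -
  have "(\<lambda>jl. \<Sum>a\<in>I. tprod (u a) (v a) jl) \<in> tens X Y"
    by (rule lsub_sum[OF lsub_tens assms(1)]) (use assms(2) tprod_tens in blast)
  then show ?thesis unfolding tensor_sum_def tprod_def by (simp add: case_prod_beta')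
qed

lemma tens_zero_right: "tens X {zerov} = {zerov}"
proof
  have "{\<lambda>(j, l). x j * y l |x y. x \<in> X \<and> y \<in> {zerov}} \<subseteq> {zerov}"
    by (auto simp: zerov_def)
  then show "tens X {zerov} \<subseteq> {zerov}" unfolding tens_def by (rule lin_span_minimal[OF lsub_zero_space])
  show "{zerov} \<subseteq> tens X {zerov}" using lsub_zero[OF lsub_tens] by blast
qed

lemma tens_zero_left: "tens {zerov} Y = {zerov}"
proof
  have "{\<lambda>(j, l). x j * y l |x y. x \<in> {zerov} \<and> y \<in> Y} \<subseteq> {zerov}"
    by (auto simp: zerov_def)
  then show "tens {zerov} Y \<subseteq> {zerov}" unfolding tens_def by (rule lin_span_minimal[OF lsub_zero_space])
  show "{zerov} \<subseteq> tens {zerov} Y" using lsub_zero[OF lsub_tens] by blast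
qed

text \<open>Finite weighted sums of elementary tensors with factors in X and Y form a
  subspace; it contains all elementary tensors and hence X \<otimes> Y.\<close>
definition weighted_tensor_sums :: "('b \<Rightarrow> 'k::field) set \<Rightarrow> ('b \<Rightarrow> 'k) set \<Rightarrow> ('b \<times> 'b \<Rightarrow> 'k) set" where
  "weighted_tensor_sums X Y = {t. \<exists>P w. finite P \<and> P \<subseteq> X \<times> Y \<and>
      t = (\<lambda>(j, l). \<Sum>q\<in>P. w q * fst q j * snd q l)}"

lemma lsub_weighted_tensor_sums: "lin_subspace (weighted_tensor_sums X Y)"
  unfolding lin_subspace_def
proof (intro conjI ballI allI)
  let ?R = "weighted_tensor_sums X Y"
  show "zerov \<in> ?R"
    unfolding weighted_tensor_sums_def by (intro CollectI exI[of _ "{}"]) (auto simp: zerov_def)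
next
  fix x y assume "x \<in> weighted_tensor_sums X Y" "y \<in> weighted_tensor_sums X Y"
  then obtain P1 w1 P2 w2 where 1: "finite P1" "P1 \<subseteq> X \<times> Y" "x = (\<lambda>(j, l). \<Sum>q\<in>P1. w1 q * fst q j * snd q l)"
    and 2: "finite P2" "P2 \<subseteq> X \<times> Y" "y = (\<lambda>(j, l). \<Sum>q\<in>P2. w2 q * fst q j * snd q l)"
    unfolding weighted_tensor_sums_def by blast
  define w where "w q = (if q \<in> P1 then w1 q else 0) + (if q \<in> P2 then w2 q else 0)" for q
  have ext1: "(\<Sum>q\<in>P1. w1 q * fst q j * snd q l) = (\<Sum>q\<in>P1 \<union> P2. (if q \<in> P1 then w1 q else 0) * fst q j * snd q l)"
    and ext2: "(\<Sum>q\<in>P2. w2 q * fst q j * snd q l) = (\<Sum>q\<in>P1 \<union> P2. (if q \<in> P2 then w2 q else 0) * fst q j * snd q l)"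
    for j l using 1 2 by (intro sum.mono_neutral_cong_left; auto)+
  have "x (j, l) + y (j, l) = (\<Sum>q\<in>P1 \<union> P2. w q * fst q j * snd q l)" for j l
    unfolding 1(3) 2(3) w_def by (simp add: ext1 ext2 sum.distrib[symmetric] distrib_right)
  then have "(\<lambda>i. x i + y i) = (\<lambda>(j, l). \<Sum>q\<in>P1 \<union> P2. w q * fst q j * snd q l)"
    by (auto simp: fun_eq_iff)
  then show "(\<lambda>i. x i + y i) \<in> weighted_tensor_sums X Y" unfolding weighted_tensor_sums_def
    by (intro CollectI exI[of _ "P1 \<union> P2"] exI[of _ w]) (use 1 2 in auto)
next
  fix a x assume "x \<in> weighted_tensor_sums X Y"
  then obtain P w where 1: "finite P" "P \<subseteq> X \<times> Y" "x = (\<lambda>(j, l). \<Sum>q\<in>P. w q * fst q j * snd q l)"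
    unfolding weighted_tensor_sums_def by blast
  have "(\<lambda>i. a * x i) = (\<lambda>(j, l). \<Sum>q\<in>P. (a * w q) * fst q j * snd q l)"
    using 1 by (auto simp: fun_eq_iff sum_distrib_left algebra_simps)
  then show "(\<lambda>i. a * x i) \<in> weighted_tensor_sums X Y" unfolding weighted_tensor_sums_def
    by (intro CollectI exI[of _ P] exI[of _ "\<lambda>q. a * w q"]) (use 1 in auto)
qed

text \<open>Every element of X \<otimes> Y is a finite sum of elementary tensors with factors
  in X and Y (the weights are absorbed into the subspace X).\<close>
lemma tens_representation:
  fixes X Y :: "('b \<Rightarrow> 'k::field) set"
  assumes "t \<in> tens X Y" and X: "lin_subspace X"
  obtains I :: "(('b \<Rightarrow> 'k) \<times> ('b \<Rightarrow> 'k)) set" and u v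
  where "finite I" "\<forall>a\<in>I. u a \<in> X \<and> v a \<in> Y" "t = tensor_sum I u v"
proof -
  have "(\<lambda>(j, l). x j * y l) \<in> weighted_tensor_sums X Y" if "x \<in> X" "y \<in> Y" for x y
    unfolding weighted_tensor_sums_def using that
    by (intro CollectI exI[of _ "{(x, y)}"] exI[of _ "\<lambda>_. 1"]) auto
  then have "tens X Y \<subseteq> weighted_tensor_sums X Y"
    unfolding tens_def by (intro lin_span_minimal lsub_weighted_tensor_sums) auto
  then obtain P w where P: "finite P" "P \<subseteq> X \<times> Y"
    and t: "t = (\<lambda>(j, l). \<Sum>q\<in>P. w q * fst q j * snd q l)"
    using assms(1) unfolding weighted_tensor_sums_def by blast
  have "\<forall>q\<in>P. (\<lambda>i. w q * fst q i) \<in> X \<and> snd q \<in> Y" using P(2) lsub_scale[OF X] by auto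
  moreover have "t = tensor_sum P (\<lambda>q i. w q * fst q i) snd" by (simp add: t tensor_sum_def)
  ultimately show ?thesis by (rule that[OF P(1)])
qed

lemma tensor_sum_Cset:
  assumes "finite I" "\<And>a. a \<in> I \<Longrightarrow> u a \<in> Cset \<and> v a \<in> Cset"
  shows "tensor_sum I u v \<in> Cset"
proof -
  have "{q. tensor_sum I u v q \<noteq> 0} \<subseteq> (\<Union>a\<in>I. {j. u a j \<noteq> 0} \<times> {l. v a l \<noteq> 0})"
    by (force simp: tensor_sum_def case_prod_beta' dest: sum.not_neutral_contains_not_neutral)
  moreover have "finite (\<Union>a\<in>I. {j. u a j \<noteq> 0} \<times> {l. v a l \<noteq> 0})"
    using assms by (auto simp: Cset_iff)
  ultimately show ?thesis by (auto simp: Cset_iff intro: finite_subset)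
qed

lemma tens_Cset:
  assumes "t \<in> tens U V" "lin_subspace U" "U \<subseteq> Cset" "V \<subseteq> Cset"
  shows "t \<in> Cset"
  using assms by (elim tens_representation) (auto intro!: tensor_sum_Cset)

lemma Cset_tens_Cset:
  fixes t :: "'b \<times> 'b \<Rightarrow> 'k::field"
  assumes "t \<in> Cset"
  shows "t \<in> tens Cset Cset"
proof -
  define I where "I = {q. t q \<noteq> 0}"
  have fin: "finite I" using assms by (simp add: I_def Cset_iff)
  have unit: "(unit_vec m :: 'b \<Rightarrow> 'k) \<in> Cset" for m
    by (auto simp: Cset_iff unit_vec_def intro: finite_subset[of _ "{m}"])
  have "(\<Sum>q\<in>I. t q * unit_vec (fst q) j * unit_vec (snd q) l) = t (j, l)" for j l
  proof -
    have "(\<Sum>q\<in>I. t q * unit_vec (fst q) j * unit_vec (snd q) l) = (\<Sum>q\<in>I. if q = (j, l) then t q else 0)"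
      by (intro sum.cong refl) (auto simp: unit_vec_def)
    then show ?thesis using fin by (simp add: I_def)
  qed
  then have "t = tensor_sum I (\<lambda>q i. t q * unit_vec (fst q) i) (\<lambda>q. unit_vec (snd q))"
    by (auto simp: tensor_sum_def fun_eq_iff)
  also have "\<dots> \<in> tens Cset Cset"
    using unit lsub_scale[OF lsub_Cset] by (intro tensor_sum_tens[OF fin]) auto
  finally show ?thesis .
qed

text \<open>For a tensor t and a functional p, contr_r t p = (id \<otimes> p) t and
  contr_l p t = (p \<otimes> id) t; the left contraction is the right one of the
  flipped tensor.\<close>

definition flip :: "('b \<times> 'b \<Rightarrow> 'k) \<Rightarrow> ('b \<times> 'b \<Rightarrow> 'k)" where
  "flip t = (\<lambda>(j, l). t (l, j))"

definition contr_r :: "('b \<times> 'b \<Rightarrow> 'k::field) \<Rightarrow> ('b \<Rightarrow> 'k) \<Rightarrow> ('b \<Rightarrow> 'k)" where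
  "contr_r t p = (\<lambda>j. pairing p (\<lambda>l. t (j, l)))"

definition contr_l :: "('b \<Rightarrow> 'k::field) \<Rightarrow> ('b \<times> 'b \<Rightarrow> 'k) \<Rightarrow> ('b \<Rightarrow> 'k)" where
  "contr_l p t = contr_r (flip t) p"

lemma flip_flip [simp]: "flip (flip t) = t"
  unfolding flip_def by (auto simp: fun_eq_iff)

lemma flip_add: "flip (\<lambda>i. a i + b i) = (\<lambda>i. flip a i + flip b i)"
  unfolding flip_def by (auto simp: fun_eq_iff)

lemma flip_tensor_sum: "flip (tensor_sum I u v) = tensor_sum I v u"
  unfolding flip_def tensor_sum_def by (auto simp: fun_eq_iff mult.commute)

lemma flip_tens: "t \<in> tens U V \<Longrightarrow> lin_subspace U \<Longrightarrow> flip t \<in> tens V U"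
  by (elim tens_representation) (auto simp: flip_tensor_sum intro: tensor_sum_tens)

lemma flip_ssum:
  "t \<in> ssum (tens X Y) (tens U V) \<Longrightarrow> lin_subspace X \<Longrightarrow> lin_subspace U \<Longrightarrow>
    flip t \<in> ssum (tens Y X) (tens V U)"
  by (erule ssumE) (auto simp: flip_add intro!: ssumI flip_tens)

lemma flip_Cset: "t \<in> Cset \<Longrightarrow> flip t \<in> Cset"
proof -
  assume "t \<in> Cset"
  then have "finite ((\<lambda>(a, b). (b, a)) ` {q. t q \<noteq> 0})" by (simp add: Cset_iff)
  moreover have "{q. flip t q \<noteq> 0} \<subseteq> (\<lambda>(a, b). (b, a)) ` {q. t q \<noteq> 0}"
    unfolding flip_def by force
  ultimately show ?thesis by (auto simp: Cset_iff intro: finite_subset)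
qed

lemma row_Cset: "t \<in> Cset \<Longrightarrow> (\<lambda>l. t (j, l)) \<in> Cset"
proof -
  assume "t \<in> Cset"
  then have "finite (snd ` {q. t q \<noteq> 0})" by (simp add: Cset_iff)
  moreover have "{l. t (j, l) \<noteq> 0} \<subseteq> snd ` {q. t q \<noteq> 0}" by force
  ultimately show ?thesis by (auto simp: Cset_iff intro: finite_subset)
qed

lemma contr_r_Cset: "t \<in> Cset \<Longrightarrow> contr_r t p \<in> Cset"
proof -
  assume "t \<in> Cset"
  then have "finite (fst ` {q. t q \<noteq> 0})" by (simp add: Cset_iff)
  moreover have "{j. contr_r t p j \<noteq> 0} \<subseteq> fst ` {q. t q \<noteq> 0}"
  proof
    fix j assume "j \<in> {j. contr_r t p j \<noteq> 0}"
    then have "{l. t (j, l) \<noteq> 0} \<noteq> {}" unfolding contr_r_def pairing_def by (auto intro: ccontr)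
    then show "j \<in> fst ` {q. t q \<noteq> 0}" by force
  qed
  ultimately show ?thesis by (auto simp: Cset_iff intro: finite_subset)
qed

lemma contr_l_Cset: "t \<in> Cset \<Longrightarrow> contr_l p t \<in> Cset"
  unfolding contr_l_def by (intro contr_r_Cset flip_Cset)

lemma contr_r_add:
  "t1 \<in> Cset \<Longrightarrow> t2 \<in> Cset \<Longrightarrow> contr_r (\<lambda>i. t1 i + t2 i) p = (\<lambda>j. contr_r t1 p j + contr_r t2 p j)"
  unfolding contr_r_def by (simp add: pairing_add row_Cset)

lemma contr_l_add:
  "t1 \<in> Cset \<Longrightarrow> t2 \<in> Cset \<Longrightarrow> contr_l p (\<lambda>i. t1 i + t2 i) = (\<lambda>j. contr_l p t1 j + contr_l p t2 j)"
  unfolding contr_l_def flip_add by (intro contr_r_add flip_Cset)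

lemma contr_r_tensor_sum:
  "finite I \<Longrightarrow> (\<And>a. a \<in> I \<Longrightarrow> v a \<in> Cset) \<Longrightarrow>
    contr_r (tensor_sum I u v) p = (\<lambda>j. \<Sum>a\<in>I. u a j * pairing p (v a))"
  unfolding contr_r_def tensor_sum_def by (simp add: pairing_linear_combination)

lemma contr_r_tprod: "y \<in> Cset \<Longrightarrow> contr_r (tprod x y) p = (\<lambda>j. x j * pairing p y)"
  unfolding contr_r_def tprod_def by (simp add: pairing_scale)

lemma contr_r_tprod_annihilated:
  "y \<in> Y \<Longrightarrow> Y \<subseteq> Cset \<Longrightarrow> annihilates p Y \<Longrightarrow> contr_r (tprod x y) p = zerov"
  by (auto simp: contr_r_tprod annihilates_def zerov_def)

lemma contr_r_tens:
  fixes U V :: "('b \<Rightarrow> 'k::field) set"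
  assumes "t \<in> tens U V" "lin_subspace U" "V \<subseteq> Cset"
  shows "contr_r t p \<in> U"
proof -
  obtain I :: "(('b \<Rightarrow> 'k) \<times> ('b \<Rightarrow> 'k)) set" and u v
    where I: "finite I" "\<forall>a\<in>I. u a \<in> U \<and> v a \<in> V" "t = tensor_sum I u v"
    by (rule tens_representation[OF assms(1,2)])
  have "contr_r t p = (\<lambda>j. \<Sum>a\<in>I. u a j * pairing p (v a))"
    using I assms(3) by (auto intro: contr_r_tensor_sum)
  also have "\<dots> \<in> U"
    using I assms(2) by (intro lsub_sum) (auto intro: lsub_scale[of U _ "pairing p _", simplified mult.commute])
  finally show ?thesis .
qed

lemma contr_r_tens_annihilated:
  fixes U V :: "('b \<Rightarrow> 'k::field) set"
  assumes "t \<in> tens U V" "lin_subspace U" "V \<subseteq> Cset" "annihilates p V"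
  shows "contr_r t p = zerov"
proof -
  obtain I :: "(('b \<Rightarrow> 'k) \<times> ('b \<Rightarrow> 'k)) set" and u v
    where I: "finite I" "\<forall>a\<in>I. u a \<in> U \<and> v a \<in> V" "t = tensor_sum I u v"
    by (rule tens_representation[OF assms(1,2)])
  have "contr_r t p = (\<lambda>j. \<Sum>a\<in>I. u a j * pairing p (v a))"
    using I assms(3) by (auto intro: contr_r_tensor_sum)
  also have "\<dots> = zerov" using I(2) assms(4) by (auto simp: annihilates_def zerov_def fun_eq_iff)
  finally show ?thesis .
qed

lemma contr_l_tens: "t \<in> tens U V \<Longrightarrow> lin_subspace U \<Longrightarrow> lin_subspace V \<Longrightarrow> U \<subseteq> Cset \<Longrightarrow> contr_l p t \<in> V"
  unfolding contr_l_def by (rule contr_r_tens[OF flip_tens])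

lemma contr_l_tens_annihilated:
  "t \<in> tens U V \<Longrightarrow> lin_subspace U \<Longrightarrow> lin_subspace V \<Longrightarrow> U \<subseteq> Cset \<Longrightarrow> annihilates p U \<Longrightarrow>
    contr_l p t = zerov"
  unfolding contr_l_def by (rule contr_r_tens_annihilated[OF flip_tens])

lemma contr_r_ssum:
  assumes "t \<in> ssum (tens X V) (tens U Y)" "lin_subspace X" "lin_subspace U"
    "X \<subseteq> Cset" "U \<subseteq> Cset" "V \<subseteq> Cset" "Y \<subseteq> Cset" "annihilates p Y"
  shows "contr_r t p \<in> X"
proof -
  obtain t1 t2 where t: "t1 \<in> tens X V" "t2 \<in> tens U Y" "t = (\<lambda>i. t1 i + t2 i)"
    using assms(1) by (rule ssumE)
  have "t1 \<in> Cset" "t2 \<in> Cset" using t assms tens_Cset by blast+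
  then have "contr_r t p = (\<lambda>j. contr_r t1 p j + contr_r t2 p j)" using t(3) contr_r_add by simp
  also have "\<dots> = contr_r t1 p" using contr_r_tens_annihilated[OF t(2) assms(3,7,8)] by simp
  also have "\<dots> \<in> X" by (rule contr_r_tens[OF t(1) assms(2,6)])
  finally show ?thesis .
qed

lemma contr_l_ssum:
  assumes "t \<in> ssum (tens X V) (tens U Y)" "lin_subspace X" "lin_subspace U" "lin_subspace V"
    "lin_subspace Y" "X \<subseteq> Cset" "U \<subseteq> Cset" "V \<subseteq> Cset" "Y \<subseteq> Cset" "annihilates p X"
  shows "contr_l p t \<in> Y"
proof -
  have "flip t \<in> ssum (tens Y U) (tens V X)"
    using flip_ssum[OF assms(1,2,3)] by (simp add: ssum_commute)
  then show ?thesis unfolding contr_l_def using contr_r_ssum assms by blast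
qed

section \<open>The annihilator criterion\<close>

lemma tensor_sum_eliminate_dependent:
  fixes u v :: "'i \<Rightarrow> 'b \<Rightarrow> 'k::field"
  assumes U: "lin_subspace U" and V: "lin_subspace V" and Y: "lin_subspace Y"
    and I: "finite I" "k \<in> I" and uv: "\<forall>a\<in>I. u a \<in> U \<and> v a \<in> V"
    and dep: "v k \<in> lin_span (Y \<union> v ` (I - {k}))"
  obtains u' y where "y \<in> Y \<inter> V" "\<forall>b\<in>I - {k}. u' b \<in> U"
    "tensor_sum I u v = (\<lambda>q. tensor_sum (I - {k}) u' v q + tprod (u k) y q)"
proof -
  define J where "J = I - {k}"
  have J: "finite J" "I = insert k J" "k \<notin> J" using I by (auto simp: J_def)
  obtain y \<mu> where y: "y \<in> Y" and vk: "v k = (\<lambda>i. y i + (\<Sum>b\<in>J. \<mu> b * v b i))"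
    using lin_span_insert_family[OF Y J(1), of v] dep unfolding J_def by blast
  have "(\<lambda>i. \<Sum>b\<in>J. \<mu> b * v b i) \<in> V"
    using uv J by (intro lsub_sum[OF V]) (auto intro: lsub_scale[OF V])
  moreover have "y = (\<lambda>i. v k i - (\<Sum>b\<in>J. \<mu> b * v b i))" using vk by (auto simp: fun_eq_iff)
  ultimately have "y \<in> V" using lsub_diff[OF V] uv I(2) by metis
  define u' where "u' b = (\<lambda>j. u b j + \<mu> b * u k j)" for b
  have "\<forall>b\<in>I - {k}. u' b \<in> U"
    unfolding u'_def J_def[symmetric] using uv J lsub_add[OF U] lsub_scale[OF U] by auto
  moreover have "tensor_sum I u v = (\<lambda>q. tensor_sum (I - {k}) u' v q + tprod (u k) y q)"
    using J unfolding tensor_sum_def tprod_def u'_def J_def[symmetric]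
    by (auto simp: fun_eq_iff vk algebra_simps sum_distrib_left sum.distrib)
  moreover have "y \<in> Y \<inter> V" using \<open>y \<in> Y\<close> \<open>y \<in> V\<close> by blast
  ultimately show ?thesis by (rule that[rotated 1])
qed

text \<open>If instead v k is independent of Y and the other v b, a separating
  functional annihilating Y picks out the coefficient u k.\<close>
lemma contr_r_isolates_independent:
  fixes u v :: "'i \<Rightarrow> 'b \<Rightarrow> 'k::field"
  assumes Y: "Y \<subseteq> Cset" and I: "finite I" "k \<in> I" and v: "v ` I \<subseteq> Cset"
    and indep: "v k \<notin> lin_span (Y \<union> v ` (I - {k}))"
  obtains p where "annihilates p Y" "contr_r (tensor_sum I u v) p = u k"
proof -
  let ?W = "lin_span (Y \<union> v ` (I - {k}))"
  obtain p where p: "\<forall>w\<in>?W \<inter> Cset. pairing p w = 0" "pairing p (v k) = 1"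
    using separating_functional[OF lsub_lin_span indep] v I(2) by blast
  have span: "Y \<union> v ` (I - {k}) \<subseteq> ?W \<inter> Cset"
    using lin_span_superset[of "Y \<union> v ` (I - {k})"] Y v by blast
  have "annihilates p Y" using p(1) span unfolding annihilates_def by blast
  moreover have "contr_r (tensor_sum I u v) p = u k"
  proof -
    have "pairing p (v b) = 0" if "b \<in> I - {k}" for b using p(1) span that by blast
    then have "(\<Sum>a\<in>I. u a j * pairing p (v a)) = u k j" for j
      using I p(2) by (simp add: sum.remove)
    moreover have "contr_r (tensor_sum I u v) p = (\<lambda>j. \<Sum>a\<in>I. u a j * pairing p (v a))"
      using I(1) v by (intro contr_r_tensor_sum) auto
    ultimately show ?thesis by simp
  qed
  ultimately show ?thesis by (rule that)
qed

lemma tensor_sum_annihilator_criterion: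
  fixes U V X Y :: "('b \<Rightarrow> 'k::field) set" and u v :: "'i \<Rightarrow> 'b \<Rightarrow> 'k"
  assumes U: "lin_subspace U" "U \<subseteq> Cset" and V: "lin_subspace V" "V \<subseteq> Cset"
    and X: "lin_subspace X" and Y: "lin_subspace Y" "Y \<subseteq> Cset"
    and I: "finite I" and uv: "\<forall>a\<in>I. u a \<in> U \<and> v a \<in> V"
    and contr: "\<forall>p. annihilates p Y \<longrightarrow> contr_r (tensor_sum I u v) p \<in> X"
  shows "tensor_sum I u v \<in> ssum (tens (X \<inter> U) V) (tens U (Y \<inter> V))"
  using I uv contr
proof (induction "card I" arbitrary: I u rule: less_induct)
  case (less I u)
  show ?case
  proof (cases "\<exists>k\<in>I. v k \<in> lin_span (Y \<union> v ` (I - {k}))")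
    case True
    then obtain k where k: "k \<in> I" "v k \<in> lin_span (Y \<union> v ` (I - {k}))" by blast
    obtain u' y where y: "y \<in> Y \<inter> V" and u': "\<forall>b\<in>I - {k}. u' b \<in> U"
      and split: "tensor_sum I u v = (\<lambda>q. tensor_sum (I - {k}) u' v q + tprod (u k) y q)"
      using tensor_sum_eliminate_dependent[OF U(1) V(1) Y(1) less.prems(1) k(1) less.prems(2) k(2)]
      by metis
    have u_k: "u k \<in> U" using less.prems(2) k(1) by blast
    have Cset: "tensor_sum (I - {k}) u' v \<in> Cset" "tprod (u k) y \<in> Cset"
      using u' less.prems(1,2) U(2) V(2) Y(2) y u_k
      by (auto intro!: tensor_sum_Cset tens_Cset[OF tprod_tens lsub_Cset])
    have "contr_r (tensor_sum I u v) p = contr_r (tensor_sum (I - {k}) u' v) p"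
      if "annihilates p Y" for p
      using contr_r_tprod_annihilated[of y Y p "u k"] that y Y(2)
      unfolding split contr_r_add[OF Cset] by (simp add: zerov_def)
    then have "contr_r (tensor_sum (I - {k}) u' v) p \<in> X" if "annihilates p Y" for p
      using less.prems(3) that by metis
    then have "tensor_sum (I - {k}) u' v \<in> ssum (tens (X \<inter> U) V) (tens U (Y \<inter> V))"
      using less.hyps[OF card_Diff1_less[OF less.prems(1) k(1)]] less.prems(1,2) u' by auto
    moreover have "tprod (u k) y \<in> tens U (Y \<inter> V)" using u_k y by (intro tprod_tens)
    ultimately show ?thesis
      unfolding split
      by (elim ssumE) (auto simp: add.assoc intro!: ssumI lsub_add[OF lsub_tens])
  next
    case False
    have "u k \<in> X" if k: "k \<in> I" for k
    proof -
      have "v ` I \<subseteq> Cset" using less.prems(2) V(2) by blast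
      then obtain p where "annihilates p Y" "contr_r (tensor_sum I u v) p = u k"
        using contr_r_isolates_independent[OF Y(2) less.prems(1) k] False k by metis
      then show ?thesis using less.prems(3) by metis
    qed
    then have "tensor_sum I u v \<in> tens (X \<inter> U) V"
      using less.prems(1,2) by (intro tensor_sum_tens) auto
    then show ?thesis using ssum_contains_left[OF lsub_zero[OF lsub_tens]] by blast
  qed
qed

lemma tens_annihilator_criterion:
  fixes U V X Y :: "('b \<Rightarrow> 'k::field) set"
  assumes "lin_subspace U" "lin_subspace V" "lin_subspace X" "lin_subspace Y"
    "U \<subseteq> Cset" "V \<subseteq> Cset" "Y \<subseteq> Cset" "t \<in> tens U V"
    and "\<forall>p. annihilates p Y \<longrightarrow> contr_r t p \<in> X"
  shows "t \<in> ssum (tens (X \<inter> U) V) (tens U (Y \<inter> V))"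
proof -
  obtain I :: "(('b \<Rightarrow> 'k) \<times> ('b \<Rightarrow> 'k)) set" and u v
    where "finite I" "\<forall>a\<in>I. u a \<in> U \<and> v a \<in> V" "t = tensor_sum I u v"
    by (rule tens_representation[OF assms(8,1)])
  then show ?thesis using tensor_sum_annihilator_criterion assms by blast
qed

lemma tens_annihilator_criterion_left:
  assumes "lin_subspace U" "lin_subspace V" "lin_subspace X" "lin_subspace Y"
    "U \<subseteq> Cset" "V \<subseteq> Cset" "Y \<subseteq> Cset" "t \<in> tens U V"
    and "\<forall>p. annihilates p Y \<longrightarrow> contr_l p t \<in> X"
  shows "t \<in> ssum (tens U (X \<inter> V)) (tens (Y \<inter> U) V)"
proof -
  have "flip t \<in> ssum (tens (X \<inter> V) U) (tens V (Y \<inter> U))"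
    using assms(9) unfolding contr_l_def
    by (intro tens_annihilator_criterion[OF assms(2,1,3,4,6,5,7) flip_tens[OF assms(8,1)]])
  from flip_ssum[OF this lsub_Int[OF assms(3,2)] assms(2)] show ?thesis by simp
qed

lemma tens_annihilator_criterion2:
  assumes U: "lin_subspace U" "U \<subseteq> Cset" and V: "lin_subspace V" "V \<subseteq> Cset"
    and X: "lin_subspace X1" "lin_subspace X2"
    and Y: "lin_subspace Y1" "lin_subspace Y2" "Y1 \<subseteq> Cset" "Y2 \<subseteq> Cset"
    and t: "t \<in> tens U V"
    and h1: "\<forall>p. annihilates p Y1 \<longrightarrow> contr_r t p \<in> X1"
    and h2: "\<forall>p. annihilates p Y2 \<longrightarrow> contr_r t p \<in> X2"
  shows "t \<in> ssum (tens (ssum X1 X2 \<inter> U) V) (tens U (Y1 \<inter> Y2 \<inter> V))"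
proof -
  have "t \<in> ssum (tens (X2 \<inter> U) V) (tens U (Y2 \<inter> V))"
    using U V X Y t h2 by (intro tens_annihilator_criterion) auto
  then obtain t1 t2 where t1: "t1 \<in> tens (X2 \<inter> U) V" and t2: "t2 \<in> tens U (Y2 \<inter> V)"
    and tt: "t = (\<lambda>i. t1 i + t2 i)" by (rule ssumE)
  have X12: "lin_subspace (ssum X1 X2)" "X2 \<subseteq> ssum X1 X2"
    using X lsub_ssum ssum_contains_right[OF lsub_zero[OF X(1)]] by auto
  have C: "t1 \<in> Cset" "t2 \<in> Cset"
    using tens_Cset[OF t1 lsub_Int[OF X(2) U(1)]] tens_Cset[OF t2 U(1)] U V by auto
  have "contr_r t2 p \<in> ssum X1 X2" if "annihilates p Y1" for p
  proof -
    have "contr_r t1 p \<in> X2" using contr_r_tens[OF t1 lsub_Int[OF X(2) U(1)] V(2)] by blast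
    moreover have "contr_r t2 p = (\<lambda>j. contr_r t p j + (- contr_r t1 p j))"
      unfolding tt contr_r_add[OF C] by simp
    ultimately show ?thesis
      using ssumI[OF h1[rule_format, OF that] lsub_neg[OF X(2)]] by simp
  qed
  then have "t2 \<in> ssum (tens (ssum X1 X2 \<inter> U) (Y2 \<inter> V)) (tens U (Y1 \<inter> (Y2 \<inter> V)))"
    using U V X12 Y t2 by (intro tens_annihilator_criterion lsub_Int) auto
  then obtain a b where a: "a \<in> tens (ssum X1 X2 \<inter> U) (Y2 \<inter> V)"
    and b: "b \<in> tens U (Y1 \<inter> (Y2 \<inter> V))" and ab: "t2 = (\<lambda>i. a i + b i)" by (rule ssumE)
  have "t1 \<in> tens (ssum X1 X2 \<inter> U) V" "a \<in> tens (ssum X1 X2 \<inter> U) V"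
    using t1 a X12(2) tens_mono[of "X2 \<inter> U" "ssum X1 X2 \<inter> U" V V]
      tens_mono[of "ssum X1 X2 \<inter> U" "ssum X1 X2 \<inter> U" "Y2 \<inter> V" V] by auto
  then have "(\<lambda>i. (t1 i + a i) + b i) \<in> ssum (tens (ssum X1 X2 \<inter> U) V) (tens U (Y1 \<inter> Y2 \<inter> V))"
    using b by (intro ssumI lsub_add[OF lsub_tens]) (auto simp: Int_assoc)
  then show ?thesis unfolding tt ab by (simp add: add.assoc)
qed

lemma tens_annihilator_criterion2_left:
  assumes "lin_subspace U" "U \<subseteq> Cset" "lin_subspace V" "V \<subseteq> Cset"
    "lin_subspace X1" "lin_subspace X2"
    "lin_subspace Y1" "lin_subspace Y2" "Y1 \<subseteq> Cset" "Y2 \<subseteq> Cset" "t \<in> tens U V"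
    "\<forall>p. annihilates p Y1 \<longrightarrow> contr_l p t \<in> X1" "\<forall>p. annihilates p Y2 \<longrightarrow> contr_l p t \<in> X2"
  shows "t \<in> ssum (tens U (ssum X1 X2 \<inter> V)) (tens (Y1 \<inter> Y2 \<inter> U) V)"
proof -
  have "flip t \<in> ssum (tens (ssum X1 X2 \<inter> V) U) (tens V (Y1 \<inter> Y2 \<inter> U))"
    using assms(12,13) unfolding contr_l_def
    by (intro tens_annihilator_criterion2[OF assms(3,4,1,2,5-10) flip_tens[OF assms(11,1)]])
  from flip_ssum[OF this lsub_Int[OF lsub_ssum[OF assms(5,6)] assms(3)] assms(3)] show ?thesis by simp
qed

section \<open>Coalgebra identities in coordinates\<close>

definition coassociative :: "('b \<Rightarrow> 'b \<Rightarrow> 'b \<Rightarrow> 'k::field) \<Rightarrow> bool" where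
  "coassociative c \<longleftrightarrow> (\<forall>i. finite (row c i)) \<and>
     (\<forall>i j k l. (\<Sum>m\<in>row c i. c i m l * c m j k) = (\<Sum>m\<in>row c i. c i j m * c m k l))"

lemma coalg_coassociative: "coalg c u \<Longrightarrow> coassociative c"
  by (simp add: coalg_def coassociative_def)

lemma row_memI: "c i j l \<noteq> 0 \<Longrightarrow> j \<in> row c i \<and> l \<in> row c i"
  by (auto simp: row_def)

text \<open>supp_rows c x collects the basis indices occurring in \<Delta> x, and
  supp_hull c x is a finite index set large enough to evaluate all the iterated
  comultiplications of x below.\<close>
definition supp_rows :: "('b \<Rightarrow> 'b \<Rightarrow> 'b \<Rightarrow> 'k::field) \<Rightarrow> ('b \<Rightarrow> 'k) \<Rightarrow> 'b set" where
  "supp_rows c x = (\<Union>i\<in>{i. x i \<noteq> 0}. row c i)"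

definition supp_hull :: "('b \<Rightarrow> 'b \<Rightarrow> 'b \<Rightarrow> 'k::field) \<Rightarrow> ('b \<Rightarrow> 'k) \<Rightarrow> 'b set" where
  "supp_hull c x = {i. x i \<noteq> 0} \<union> supp_rows c x \<union> (\<Union>n\<in>supp_rows c x. row c n)"

lemma finite_supp_rows: "coassociative c \<Longrightarrow> x \<in> Cset \<Longrightarrow> finite (supp_rows c x)"
  unfolding supp_rows_def coassociative_def by (auto simp: Cset_iff)

lemma finite_supp_hull: "coassociative c \<Longrightarrow> x \<in> Cset \<Longrightarrow> finite (supp_hull c x)"
  unfolding supp_hull_def using finite_supp_rows[of c x] by (auto simp: coassociative_def Cset_iff)

lemma supp_subset_hull: "{i. x i \<noteq> 0} \<subseteq> supp_hull c x"
  unfolding supp_hull_def by auto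

lemma supp_rows_subset_hull: "supp_rows c x \<subseteq> supp_hull c x"
  unfolding supp_hull_def by auto

lemma row_subset_supp_rows: "x i \<noteq> 0 \<Longrightarrow> row c i \<subseteq> supp_rows c x"
  unfolding supp_rows_def by auto

lemma in_supp_rows: "x i \<noteq> 0 \<Longrightarrow> c i j l \<noteq> 0 \<Longrightarrow> j \<in> supp_rows c x \<and> l \<in> supp_rows c x"
  unfolding supp_rows_def row_def by blast

lemma row_subset_hull: "n \<in> supp_rows c x \<Longrightarrow> row c n \<subseteq> supp_hull c x"
  unfolding supp_hull_def by auto

lemma delta_eq:
  assumes "finite F" "{i. x i \<noteq> 0} \<subseteq> F"
  shows "delta c x (j, l) = (\<Sum>i\<in>F. x i * c i j l)"
  unfolding delta_def using assms by (auto intro!: sum.mono_neutral_left)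

lemma delta_Cset:
  assumes "coassociative c" "x \<in> Cset"
  shows "delta c x \<in> Cset"
proof -
  have "{q. delta c x q \<noteq> 0} \<subseteq> supp_rows c x \<times> supp_rows c x"
  proof
    fix q assume "q \<in> {q. delta c x q \<noteq> 0}"
    then have "(\<Sum>i\<in>{i. x i \<noteq> 0}. x i * c i (fst q) (snd q)) \<noteq> 0"
      unfolding delta_def by (simp add: case_prod_beta')
    then obtain i where "i \<in> {i. x i \<noteq> 0}" "x i * c i (fst q) (snd q) \<noteq> 0"
      by (rule sum.not_neutral_contains_not_neutral)
    then show "q \<in> supp_rows c x \<times> supp_rows c x"
      using in_supp_rows[of x i c "fst q" "snd q"] by (cases q) auto
  qed
  then show ?thesis using finite_supp_rows[OF assms] by (auto simp: Cset_iff intro: finite_subset)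
qed

lemma delta_linear_combination:
  assumes "x \<in> Cset" "y \<in> Cset"
  shows "delta c (\<lambda>i. a * x i + b * y i) = (\<lambda>q. a * delta c x q + b * delta c y q)"
proof -
  define F where "F = {i. x i \<noteq> 0} \<union> {i. y i \<noteq> 0}"
  have fin: "finite F" using assms by (auto simp: F_def Cset_iff)
  have "delta c (\<lambda>i. a * x i + b * y i) (j, l) = a * delta c x (j, l) + b * delta c y (j, l)" for j l
    by (subst (1 2 3) delta_eq[OF fin]) (auto simp: F_def sum.distrib sum_distrib_left algebra_simps)
  then show ?thesis by (auto simp: fun_eq_iff)
qed

lemma delta_add: "x \<in> Cset \<Longrightarrow> y \<in> Cset \<Longrightarrow> delta c (\<lambda>i. x i + y i) = (\<lambda>q. delta c x q + delta c y q)"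
  using delta_linear_combination[of x y c 1 1] by simp

lemma delta_scale: "x \<in> Cset \<Longrightarrow> delta c (\<lambda>i. a * x i) = (\<lambda>q. a * delta c x q)"
  using delta_linear_combination[of x x c a 0] by simp

lemma delta_zero: "delta c zerov = zerov"
  unfolding delta_def zerov_def by (auto simp: fun_eq_iff)

text \<open>Reversing the tensor factors; this turns left contractions into right ones
  and lets us prove left-handed statements from right-handed ones.\<close>
definition opp :: "('b \<Rightarrow> 'b \<Rightarrow> 'b \<Rightarrow> 'k) \<Rightarrow> ('b \<Rightarrow> 'b \<Rightarrow> 'b \<Rightarrow> 'k)" where
  "opp c = (\<lambda>i j l. c i l j)"

lemma opp_apply [simp]: "opp c i j l = c i l j"
  by (simp add: opp_def)

lemma row_opp [simp]: "row (opp c) i = row c i"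
  unfolding row_def opp_def by auto

lemma supp_hull_opp [simp]: "supp_hull (opp c) x = supp_hull c x"
  unfolding supp_hull_def supp_rows_def by simp

lemma delta_opp: "delta (opp c) x = flip (delta c x)"
  unfolding delta_def flip_def opp_def by (auto simp: fun_eq_iff)

lemma contr_l_delta_opp: "contr_l p (delta c x) = contr_r (delta (opp c) x) p"
  by (simp add: contr_l_def delta_opp)

lemma coassociative_opp: "coassociative c \<Longrightarrow> coassociative (opp c)"
  unfolding coassociative_def row_opp by (auto simp: opp_def mult.commute)

lemma coalg_opp: "coalg c u \<Longrightarrow> coalg (opp c) u"
  unfolding coalg_def row_opp by (auto simp: opp_def mult.commute)

lemma counit_right:
  assumes cu: "coalg c u" and x: "x \<in> Cset"
  shows "contr_r (delta c x) u = x"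
proof
  fix j
  let ?R = "supp_rows c x" and ?F = "{i. x i \<noteq> 0}"
  have finR: "finite ?R" using finite_supp_rows[OF coalg_coassociative[OF cu] x] .
  have finF: "finite ?F" using x by (simp add: Cset_iff)
  have dx: "delta c x (j, l) = (\<Sum>i\<in>?F. x i * c i j l)" for l by (rule delta_eq[OF finF]) auto
  have "{l. delta c x (j, l) \<noteq> 0} \<subseteq> ?R"
  proof
    fix l assume "l \<in> {l. delta c x (j, l) \<noteq> 0}"
    then obtain i where "i \<in> ?F" "x i * c i j l \<noteq> 0"
      unfolding dx by (auto elim: sum.not_neutral_contains_not_neutral)
    then show "l \<in> ?R" using in_supp_rows[of x i c j l] by auto
  qed
  then have "contr_r (delta c x) u j = (\<Sum>l\<in>?R. \<Sum>i\<in>?F. x i * (c i j l * u l))"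
    unfolding contr_r_def by (simp add: pairing_eq[OF finR] dx sum_distrib_left mult_ac)
  also have "\<dots> = (\<Sum>i\<in>?F. x i * (\<Sum>l\<in>?R. c i j l * u l))"
    by (subst sum.swap) (simp add: sum_distrib_left)
  also have "\<dots> = (\<Sum>i\<in>?F. x i * (if j = i then 1 else 0))"
  proof (intro sum.cong refl arg_cong2[where f="(*)"])
    fix i assume i: "i \<in> ?F"
    have "(\<Sum>l\<in>?R. c i j l * u l) = (\<Sum>l\<in>row c i. c i j l * u l)"
      using row_subset_supp_rows[of x i c] i finR by (intro sum.mono_neutral_right) (auto simp: row_def)
    also have "\<dots> = (if j = i then 1 else 0)" using cu by (simp add: coalg_def)
    finally show "(\<Sum>l\<in>?R. c i j l * u l) = (if j = i then 1 else 0)" .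
  qed
  also have "\<dots> = x j" using finF by (simp add: if_distrib[of "\<lambda>z. _ * z"] cong: if_cong)
  finally show "contr_r (delta c x) u j = x j" .
qed

lemma counit_left: "coalg c u \<Longrightarrow> x \<in> Cset \<Longrightarrow> contr_l u (delta c x) = x"
  unfolding contr_l_delta_opp by (rule counit_right[OF coalg_opp])

lemma supp_rows_opp [simp]: "supp_rows (opp c) x = supp_rows c x"
  unfolding supp_rows_def by simp

lemma delta_nonzero:
  assumes "delta c x (j, l) \<noteq> 0"
  shows "j \<in> supp_rows c x" "l \<in> supp_rows c x"
proof -
  obtain i where "i \<in> {i. x i \<noteq> 0}" "x i * c i j l \<noteq> 0"
    using assms unfolding delta_def by (auto elim: sum.not_neutral_contains_not_neutral)
  then show "j \<in> supp_rows c x" "l \<in> supp_rows c x" using in_supp_rows[of x i c j l] by auto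
qed

lemma delta_hull:
  "coassociative c \<Longrightarrow> x \<in> Cset \<Longrightarrow> delta c x (j, l) = (\<Sum>i\<in>supp_hull c x. x i * c i j l)"
  by (rule delta_eq[OF finite_supp_hull supp_subset_hull])

lemma contr_r_delta:
  assumes "coassociative c" "x \<in> Cset"
  shows "contr_r (delta c x) p m = (\<Sum>l\<in>supp_hull c x. p l * (\<Sum>i\<in>supp_hull c x. x i * c i m l))"
proof -
  have "{l. delta c x (m, l) \<noteq> 0} \<subseteq> supp_hull c x"
    using delta_nonzero(2)[of c x m] supp_rows_subset_hull[of c x] by auto
  then have "contr_r (delta c x) p m = (\<Sum>l\<in>supp_hull c x. p l * delta c x (m, l))"
    unfolding contr_r_def by (rule pairing_eq[OF finite_supp_hull[OF assms]])
  then show ?thesis by (simp add: delta_hull[OF assms])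
qed

lemma contr_l_delta:
  assumes "coassociative c" "x \<in> Cset"
  shows "contr_l f (delta c x) n = (\<Sum>j\<in>supp_hull c x. f j * (\<Sum>i\<in>supp_hull c x. x i * c i j n))"
  using contr_r_delta[OF coassociative_opp[OF assms(1)] assms(2)]
  by (simp add: contr_l_delta_opp)

lemma contr_r_delta_supp:
  assumes "coassociative c" "x \<in> Cset"
  shows "{m. contr_r (delta c x) p m \<noteq> 0} \<subseteq> supp_rows c x"
proof
  fix m assume "m \<in> {m. contr_r (delta c x) p m \<noteq> 0}"
  then have "pairing p (\<lambda>l. delta c x (m, l)) \<noteq> 0" by (simp add: contr_r_def)
  then obtain l where "delta c x (m, l) \<noteq> 0"
    unfolding pairing_def by (auto elim: sum.not_neutral_contains_not_neutral)
  then show "m \<in> supp_rows c x" by (rule delta_nonzero)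
qed

lemma contr_l_delta_supp:
  "coassociative c \<Longrightarrow> x \<in> Cset \<Longrightarrow> {n. contr_l f (delta c x) n \<noteq> 0} \<subseteq> supp_rows c x"
  unfolding contr_l_delta_opp using contr_r_delta_supp[OF coassociative_opp] by simp

lemma contr_r_delta_within:
  assumes ax: "coassociative c" and x: "x \<in> Cset" and y: "{m. y m \<noteq> 0} \<subseteq> supp_rows c x"
  shows "contr_r (delta c y) q a = (\<Sum>b\<in>supp_hull c x. q b * (\<Sum>m\<in>supp_hull c x. y m * c m a b))"
proof -
  let ?G = "supp_hull c x"
  have finG: "finite ?G" by (rule finite_supp_hull[OF ax x])
  have dy: "delta c y (a', b') = (\<Sum>m\<in>?G. y m * c m a' b')" for a' b'
    by (rule delta_eq[OF finG subset_trans[OF y supp_rows_subset_hull]])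
  have "{b. delta c y (a, b) \<noteq> 0} \<subseteq> ?G"
  proof
    fix b assume "b \<in> {b. delta c y (a, b) \<noteq> 0}"
    then obtain m where "m \<in> ?G" "y m * c m a b \<noteq> 0"
      unfolding dy by (auto elim: sum.not_neutral_contains_not_neutral)
    then show "b \<in> ?G" using y row_memI[of c m a b] row_subset_hull[of m c x] by auto
  qed
  then have "contr_r (delta c y) q a = (\<Sum>b\<in>?G. q b * delta c y (a, b))"
    unfolding contr_r_def by (rule pairing_eq[OF finG])
  then show ?thesis by (simp add: dy)
qed

lemma contr_l_delta_within:
  assumes "coassociative c" "x \<in> Cset" "{m. y m \<noteq> 0} \<subseteq> supp_rows c x"
  shows "contr_l f (delta c y) b = (\<Sum>a\<in>supp_hull c x. f a * (\<Sum>m\<in>supp_hull c x. y m * c m a b))"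
  using contr_r_delta_within[OF coassociative_opp[OF assms(1)], of x y] assms(2,3)
  by (simp add: contr_l_delta_opp)

lemma coassoc_within_hull:
  assumes ax: "coassociative c" and x: "x \<in> Cset"
  shows "x i * (\<Sum>m\<in>supp_hull c x. c i m l * c m a b) = x i * (\<Sum>m\<in>supp_hull c x. c i a m * c m b l)"
proof (cases "x i = 0")
  case False
  have sub: "row c i \<subseteq> supp_hull c x"
    using row_subset_supp_rows[of x i c, OF False] supp_rows_subset_hull[of c x] by blast
  have fin: "finite (supp_hull c x)" by (rule finite_supp_hull[OF ax x])
  have "(\<Sum>m\<in>supp_hull c x. c i m l * c m a b) = (\<Sum>m\<in>row c i. c i m l * c m a b)"
    using sub fin by (intro sum.mono_neutral_right) (auto simp: row_def)
  also have "\<dots> = (\<Sum>m\<in>row c i. c i a m * c m b l)" using ax by (simp add: coassociative_def)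
  also have "\<dots> = (\<Sum>m\<in>supp_hull c x. c i a m * c m b l)"
    using sub fin by (intro sum.mono_neutral_left) (auto simp: row_def)
  finally show ?thesis by simp
qed simp

definition convol :: "('b \<Rightarrow> 'b \<Rightarrow> 'b \<Rightarrow> 'k::field) \<Rightarrow> ('b \<Rightarrow> 'k) \<Rightarrow> ('b \<Rightarrow> 'k) \<Rightarrow> ('b \<Rightarrow> 'k)" where
  "convol c q p = (\<lambda>m. pairing q (contr_r (delta c (unit_vec m)) p))"

lemma convol_eq:
  assumes fin: "finite G" and m: "row c m \<subseteq> G"
  shows "convol c q p m = (\<Sum>b\<in>G. q b * (\<Sum>l\<in>G. p l * c m b l))"
proof -
  have dm: "delta c (unit_vec m) (b, l) = c m b l" for b l
    using delta_eq[of "{m}" "unit_vec m" c b l] by (auto simp: unit_vec_def)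
  have r: "contr_r (delta c (unit_vec m)) p b = (\<Sum>l\<in>G. p l * c m b l)" for b
    unfolding contr_r_def dm by (rule pairing_eq[OF fin]) (use row_memI[of c m b] m in auto)
  have "{b. (\<Sum>l\<in>G. p l * c m b l) \<noteq> 0} \<subseteq> G"
  proof
    fix b assume "b \<in> {b. (\<Sum>l\<in>G. p l * c m b l) \<noteq> 0}"
    then obtain l where "p l * c m b l \<noteq> 0" by (auto elim: sum.not_neutral_contains_not_neutral)
    then show "b \<in> G" using row_memI[of c m b l] m by auto
  qed
  then show ?thesis unfolding convol_def r by (rule pairing_eq[OF fin])
qed

lemma convol_times_delta:
  assumes "coassociative c" "x \<in> Cset"
  shows "(\<Sum>b\<in>supp_hull c x. q b * (\<Sum>l\<in>supp_hull c x. p l * c m b l)) * delta c x (a, m)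
    = convol c q p m * delta c x (a, m)"
proof (cases "delta c x (a, m) = 0")
  case False
  then have "row c m \<subseteq> supp_hull c x" using delta_nonzero(2) row_subset_hull by metis
  then show ?thesis using convol_eq[OF finite_supp_hull[OF assms], of c m q p] by simp
qed simp

lemma sum_move_innermost:
  "(\<Sum>a\<in>G. \<Sum>b\<in>G. \<Sum>c\<in>G. \<Sum>d\<in>G. f a b c d)
    = (\<Sum>d\<in>G. \<Sum>a\<in>G. \<Sum>b\<in>G. \<Sum>c\<in>G. (f a b c d :: 'a::comm_monoid_add))"
proof -
  have "(\<Sum>a\<in>G. \<Sum>b\<in>G. \<Sum>c\<in>G. \<Sum>d\<in>G. f a b c d) = (\<Sum>a\<in>G. \<Sum>b\<in>G. \<Sum>d\<in>G. \<Sum>c\<in>G. f a b c d)"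
    by (intro sum.cong refl sum.swap)
  also have "\<dots> = (\<Sum>a\<in>G. \<Sum>d\<in>G. \<Sum>b\<in>G. \<Sum>c\<in>G. f a b c d)"
    by (intro sum.cong refl sum.swap)
  also have "\<dots> = (\<Sum>d\<in>G. \<Sum>a\<in>G. \<Sum>b\<in>G. \<Sum>c\<in>G. f a b c d)"
    by (rule sum.swap)
  finally show ?thesis .
qed

lemma sum_reorder_dacb:
  "(\<Sum>a\<in>G. \<Sum>b\<in>G. \<Sum>c\<in>G. \<Sum>d\<in>G. f a b c d)
    = (\<Sum>d\<in>G. \<Sum>a\<in>G. \<Sum>c\<in>G. \<Sum>b\<in>G. (f a b c d :: 'a::comm_monoid_add))"
proof -
  have "(\<Sum>a\<in>G. \<Sum>b\<in>G. \<Sum>c\<in>G. \<Sum>d\<in>G. f a b c d) = (\<Sum>d\<in>G. \<Sum>a\<in>G. \<Sum>b\<in>G. \<Sum>c\<in>G. f a b c d)"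
    by (rule sum_move_innermost)
  also have "\<dots> = (\<Sum>d\<in>G. \<Sum>a\<in>G. \<Sum>c\<in>G. \<Sum>b\<in>G. f a b c d)"
    by (intro sum.cong refl sum.swap)
  finally show ?thesis .
qed

lemma sum_reorder_dbca:
  "(\<Sum>a\<in>G. \<Sum>b\<in>G. \<Sum>c\<in>G. \<Sum>d\<in>G. f a b c d)
    = (\<Sum>d\<in>G. \<Sum>b\<in>G. \<Sum>c\<in>G. \<Sum>a\<in>G. (f a b c d :: 'a::comm_monoid_add))"
proof -
  have "(\<Sum>a\<in>G. \<Sum>b\<in>G. \<Sum>c\<in>G. \<Sum>d\<in>G. f a b c d) = (\<Sum>d\<in>G. \<Sum>a\<in>G. \<Sum>b\<in>G. \<Sum>c\<in>G. f a b c d)"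
    by (rule sum_move_innermost)
  also have "\<dots> = (\<Sum>d\<in>G. \<Sum>b\<in>G. \<Sum>a\<in>G. \<Sum>c\<in>G. f a b c d)"
    by (intro sum.cong refl sum.swap)
  also have "\<dots> = (\<Sum>d\<in>G. \<Sum>b\<in>G. \<Sum>c\<in>G. \<Sum>a\<in>G. f a b c d)"
    by (intro sum.cong refl sum.swap)
  finally show ?thesis .
qed

lemma sum_reorder_dcab:
  "(\<Sum>a\<in>G. \<Sum>b\<in>G. \<Sum>c\<in>G. \<Sum>d\<in>G. f a b c d)
    = (\<Sum>d\<in>G. \<Sum>c\<in>G. \<Sum>a\<in>G. \<Sum>b\<in>G. (f a b c d :: 'a::comm_monoid_add))"
proof -
  have "(\<Sum>a\<in>G. \<Sum>b\<in>G. \<Sum>c\<in>G. \<Sum>d\<in>G. f a b c d) = (\<Sum>d\<in>G. \<Sum>a\<in>G. \<Sum>b\<in>G. \<Sum>c\<in>G. f a b c d)"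
    by (rule sum_move_innermost)
  also have "\<dots> = (\<Sum>d\<in>G. \<Sum>a\<in>G. \<Sum>c\<in>G. \<Sum>b\<in>G. f a b c d)"
    by (intro sum.cong refl sum.swap)
  also have "\<dots> = (\<Sum>d\<in>G. \<Sum>c\<in>G. \<Sum>a\<in>G. \<Sum>b\<in>G. f a b c d)"
    by (intro sum.cong refl sum.swap)
  finally show ?thesis .
qed

lemma contr_r_delta_contr_r:
  assumes ax: "coassociative c" and x: "x \<in> Cset"
  shows "contr_r (delta c (contr_r (delta c x) p)) q = contr_r (delta c x) (convol c q p)"
proof
  fix a
  let ?G = "supp_hull c x"
  have finG: "finite ?G" by (rule finite_supp_hull[OF ax x])
  define y where "y = contr_r (delta c x) p"
  have y: "y m = (\<Sum>l\<in>?G. p l * (\<Sum>i\<in>?G. x i * c i m l))" for m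
    unfolding y_def by (rule contr_r_delta[OF ax x])
  have "contr_r (delta c y) q a = (\<Sum>b\<in>?G. q b * (\<Sum>m\<in>?G. y m * c m a b))"
    unfolding y_def by (rule contr_r_delta_within[OF ax x contr_r_delta_supp[OF ax x]])
  also have "\<dots> = (\<Sum>b\<in>?G. \<Sum>m\<in>?G. \<Sum>l\<in>?G. \<Sum>i\<in>?G. q b * (p l * (x i * (c i m l * c m a b))))"
    by (simp add: y sum_distrib_left sum_distrib_right mult_ac)
  also have "\<dots> = (\<Sum>i\<in>?G. \<Sum>b\<in>?G. \<Sum>l\<in>?G. \<Sum>m\<in>?G. q b * (p l * (x i * (c i m l * c m a b))))"
    by (rule sum_reorder_dacb)
  also have "\<dots> = (\<Sum>i\<in>?G. \<Sum>b\<in>?G. \<Sum>l\<in>?G. q b * (p l * (x i * (\<Sum>m\<in>?G. c i m l * c m a b))))"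
    by (simp add: sum_distrib_left)
  also have "\<dots> = (\<Sum>i\<in>?G. \<Sum>b\<in>?G. \<Sum>l\<in>?G. q b * (p l * (x i * (\<Sum>m\<in>?G. c i a m * c m b l))))"
    by (simp only: coassoc_within_hull[OF ax x])
  also have "\<dots> = (\<Sum>i\<in>?G. \<Sum>b\<in>?G. \<Sum>l\<in>?G. \<Sum>m\<in>?G. q b * (p l * (x i * (c i a m * c m b l))))"
    by (simp add: sum_distrib_left)
  also have "\<dots> = (\<Sum>m\<in>?G. \<Sum>b\<in>?G. \<Sum>l\<in>?G. \<Sum>i\<in>?G. q b * (p l * (x i * (c i a m * c m b l))))"
    by (rule sum_reorder_dbca[symmetric])
  also have "\<dots> = (\<Sum>m\<in>?G. (\<Sum>b\<in>?G. q b * (\<Sum>l\<in>?G. p l * c m b l)) * delta c x (a, m))"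
    by (simp add: delta_hull[OF ax x] sum_distrib_left sum_distrib_right mult_ac)
  also have "\<dots> = (\<Sum>m\<in>?G. convol c q p m * delta c x (a, m))"
    by (simp add: convol_times_delta[OF ax x])
  also have "\<dots> = contr_r (delta c x) (convol c q p) a"
  proof -
    have "{m. delta c x (a, m) \<noteq> 0} \<subseteq> ?G"
      using delta_nonzero(2)[of c x a] supp_rows_subset_hull[of c x] by auto
    then show ?thesis unfolding contr_r_def by (rule pairing_eq[OF finG, symmetric])
  qed
  finally show "contr_r (delta c y) q a = contr_r (delta c x) (convol c q p) a" .
qed

lemma contr_r_delta_contr_l:
  assumes ax: "coassociative c" and x: "x \<in> Cset"
  shows "contr_r (delta c (contr_l f (delta c x))) g = contr_l f (delta c (contr_r (delta c x) g))"
proof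
  fix b
  let ?G = "supp_hull c x"
  define y where "y = contr_l f (delta c x)"
  define z where "z = contr_r (delta c x) g"
  have y: "y n = (\<Sum>j\<in>?G. f j * (\<Sum>i\<in>?G. x i * c i j n))" for n
    unfolding y_def by (rule contr_l_delta[OF ax x])
  have z: "z n = (\<Sum>m\<in>?G. g m * (\<Sum>i\<in>?G. x i * c i n m))" for n
    unfolding z_def by (rule contr_r_delta[OF ax x])
  have "contr_r (delta c y) g b = (\<Sum>m\<in>?G. g m * (\<Sum>n\<in>?G. y n * c n b m))"
    unfolding y_def by (rule contr_r_delta_within[OF ax x contr_l_delta_supp[OF ax x]])
  also have "\<dots> = (\<Sum>m\<in>?G. \<Sum>n\<in>?G. \<Sum>j\<in>?G. \<Sum>i\<in>?G. f j * (g m * (x i * (c i j n * c n b m))))"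
    by (simp add: y sum_distrib_left sum_distrib_right mult_ac)
  also have "\<dots> = (\<Sum>i\<in>?G. \<Sum>j\<in>?G. \<Sum>m\<in>?G. \<Sum>n\<in>?G. f j * (g m * (x i * (c i j n * c n b m))))"
    by (rule sum_reorder_dcab)
  also have "\<dots> = (\<Sum>i\<in>?G. \<Sum>j\<in>?G. \<Sum>m\<in>?G. f j * (g m * (x i * (\<Sum>n\<in>?G. c i j n * c n b m))))"
    by (simp add: sum_distrib_left)
  also have "\<dots> = (\<Sum>i\<in>?G. \<Sum>j\<in>?G. \<Sum>m\<in>?G. f j * (g m * (x i * (\<Sum>n\<in>?G. c i n m * c n j b))))"
    by (simp only: coassoc_within_hull[OF ax x, symmetric])
  also have "\<dots> = (\<Sum>i\<in>?G. \<Sum>j\<in>?G. \<Sum>m\<in>?G. \<Sum>n\<in>?G. f j * (g m * (x i * (c i n m * c n j b))))"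
    by (simp add: sum_distrib_left)
  also have "\<dots> = (\<Sum>j\<in>?G. \<Sum>n\<in>?G. \<Sum>m\<in>?G. \<Sum>i\<in>?G. f j * (g m * (x i * (c i n m * c n j b))))"
    by (rule sum_reorder_dacb[symmetric])
  also have "\<dots> = (\<Sum>j\<in>?G. f j * (\<Sum>n\<in>?G. z n * c n j b))"
    by (simp add: z sum_distrib_left sum_distrib_right mult_ac)
  also have "\<dots> = contr_l f (delta c z) b"
    unfolding z_def by (rule contr_l_delta_within[OF ax x contr_r_delta_supp[OF ax x], symmetric])
  finally show "contr_r (delta c (contr_l f (delta c x))) g b = contr_l f (delta c (contr_r (delta c x) g)) b"
    unfolding y_def z_def .
qed

lemma pairing_convol:
  assumes ax: "coassociative c" and x: "x \<in> Cset"
  shows "pairing (convol c q p) x = pairing q (contr_r (delta c x) p)"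
proof -
  let ?G = "supp_hull c x"
  have finG: "finite ?G" by (rule finite_supp_hull[OF ax x])
  have "pairing (convol c q p) x = (\<Sum>m\<in>?G. convol c q p m * x m)"
    by (rule pairing_eq[OF finG supp_subset_hull])
  also have "\<dots> = (\<Sum>m\<in>?G. (\<Sum>b\<in>?G. q b * (\<Sum>l\<in>?G. p l * c m b l)) * x m)"
  proof (intro sum.cong refl)
    fix m
    show "convol c q p m * x m = (\<Sum>b\<in>?G. q b * (\<Sum>l\<in>?G. p l * c m b l)) * x m"
    proof (cases "x m = 0")
      case False
      then have "row c m \<subseteq> ?G"
        using row_subset_supp_rows[of x m c] supp_rows_subset_hull[of c x] by blast
      then show ?thesis using convol_eq[OF finG, of c m q p] by simp
    qed simp
  qed
  also have "\<dots> = (\<Sum>m\<in>?G. \<Sum>b\<in>?G. \<Sum>l\<in>?G. q b * (p l * (x m * c m b l)))"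
    by (simp add: sum_distrib_left sum_distrib_right mult_ac)
  also have "\<dots> = (\<Sum>b\<in>?G. \<Sum>m\<in>?G. \<Sum>l\<in>?G. q b * (p l * (x m * c m b l)))"
    by (rule sum.swap)
  also have "\<dots> = (\<Sum>b\<in>?G. \<Sum>l\<in>?G. \<Sum>m\<in>?G. q b * (p l * (x m * c m b l)))"
    by (intro sum.cong refl sum.swap)
  also have "\<dots> = (\<Sum>b\<in>?G. q b * contr_r (delta c x) p b)"
    by (simp add: contr_r_delta[OF ax x] sum_distrib_left mult_ac)
  also have "\<dots> = pairing q (contr_r (delta c x) p)"
    by (rule pairing_eq[symmetric, OF finG subset_trans[OF contr_r_delta_supp[OF ax x] supp_rows_subset_hull]])
  finally show ?thesis .
qed

section \<open>Subcoalgebras and wedges\<close>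

lemma tens_by_contr_r:
  assumes "lin_subspace U" "lin_subspace V" "lin_subspace X" "U \<subseteq> Cset" "V \<subseteq> Cset"
    "t \<in> tens U V" "\<And>p. contr_r t p \<in> X"
  shows "t \<in> tens (X \<inter> U) V"
proof -
  have "t \<in> ssum (tens (X \<inter> U) V) (tens U ({zerov} \<inter> V))"
    using assms lsub_zero_space lsub_zero[OF lsub_Cset]
    by (intro tens_annihilator_criterion) auto
  then show ?thesis by (simp add: zero_Int[OF assms(2)] tens_zero_right ssum_zero_right[OF lsub_tens])
qed

lemma tens_by_contr_l:
  assumes "lin_subspace U" "lin_subspace V" "lin_subspace X" "U \<subseteq> Cset" "V \<subseteq> Cset"
    "t \<in> tens U V" "\<And>p. contr_l p t \<in> X"
  shows "t \<in> tens U (X \<inter> V)"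
proof -
  have "t \<in> ssum (tens U (X \<inter> V)) (tens ({zerov} \<inter> U) V)"
    using assms lsub_zero_space lsub_zero[OF lsub_Cset]
    by (intro tens_annihilator_criterion_left) auto
  then show ?thesis by (simp add: zero_Int[OF assms(1)] tens_zero_left ssum_zero_right[OF lsub_tens])
qed

lemma tens_by_vanishing_contr_l:
  assumes "lin_subspace U" "lin_subspace V" "lin_subspace Y" "U \<subseteq> Cset" "V \<subseteq> Cset" "Y \<subseteq> Cset"
    "t \<in> tens U V" "\<And>p. annihilates p Y \<Longrightarrow> contr_l p t = zerov"
  shows "t \<in> tens (Y \<inter> U) V"
proof -
  have "t \<in> ssum (tens U ({zerov} \<inter> V)) (tens (Y \<inter> U) V)"
    using assms lsub_zero_space by (intro tens_annihilator_criterion_left) auto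
  then show ?thesis by (simp add: zero_Int[OF assms(2)] tens_zero_right ssum_zero_left[OF lsub_tens])
qed

text \<open>A vector lies in a subspace S as soon as all right contractions of its
  comultiplication do; this is where the counit is used.\<close>
lemma mem_by_contr_r_delta:
  assumes cu: "coalg c u" and S: "lin_subspace S" "S \<subseteq> Cset" and y: "y \<in> Cset"
    and contr: "\<And>p. contr_r (delta c y) p \<in> S"
  shows "y \<in> S"
proof -
  have "delta c y \<in> tens (S \<inter> Cset) Cset"
    using S contr Cset_tens_Cset[OF delta_Cset[OF coalg_coassociative[OF cu] y]] lsub_Cset
    by (intro tens_by_contr_r) auto
  then have "contr_r (delta c y) u \<in> S \<inter> Cset" by (rule contr_r_tens) (use S lsub_Int lsub_Cset in auto)
  then show ?thesis using counit_right[OF cu y] by simp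
qed

lemma mem_by_vanishing_contr_l:
  assumes cu: "coalg c u" and A: "lin_subspace A" "A \<subseteq> Cset" and x: "x \<in> Cset"
    and vanish: "\<And>f. annihilates f A \<Longrightarrow> contr_l f (delta c x) = zerov"
  shows "x \<in> A"
proof -
  have "delta c x \<in> tens (A \<inter> Cset) Cset"
    using A vanish Cset_tens_Cset[OF delta_Cset[OF coalg_coassociative[OF cu] x]] lsub_Cset
    by (intro tens_by_vanishing_contr_l) auto
  then have "contr_r (delta c x) u \<in> A \<inter> Cset" by (rule contr_r_tens) (use A lsub_Int lsub_Cset in auto)
  then show ?thesis using counit_right[OF cu x] by simp
qed

lemma subcoalg_delta: "subcoalg c A \<Longrightarrow> x \<in> A \<Longrightarrow> delta c x \<in> tens A A"
  by (simp add: subcoalg_def)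

lemma subcoalg_opp [simp]:
  fixes c :: "'b \<Rightarrow> 'b \<Rightarrow> 'b \<Rightarrow> 'k::field"
  shows "subcoalg (opp c) A \<longleftrightarrow> subcoalg c A"
proof -
  have "subcoalg (opp c) A" if "subcoalg c A" for c :: "'b \<Rightarrow> 'b \<Rightarrow> 'b \<Rightarrow> 'k"
    using that by (auto simp: subcoalg_def delta_opp intro: flip_tens)
  from this[of c] this[of "opp c"] show ?thesis by (auto simp: opp_def)
qed

lemma convol_annihilates:
  assumes ax: "coassociative c" and B: "subcoalg c B" and q: "annihilates q B"
  shows "annihilates (convol c q p) B"
  unfolding annihilates_def
proof
  fix b assume b: "b \<in> B"
  have BC: "lin_subspace B" "B \<subseteq> Cset" using B by (auto simp: subcoalg_def)
  have "contr_r (delta c b) p \<in> B" by (rule contr_r_tens[OF subcoalg_delta[OF B b] BC])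
  then show "pairing (convol c q p) b = 0"
    using pairing_convol[OF ax, of b q p] b BC q by (auto simp: annihilates_def)
qed

lemma contr_l_delta_in_summand:
  assumes cu: "coalg c u" and S: "subcoalg c S" and A: "subcoalg c A" and x: "x \<in> Cset"
    and contr: "\<And>g. contr_r (delta c x) g \<in> ssum S A" and f: "annihilates f A"
  shows "contr_l f (delta c x) \<in> S"
proof (rule mem_by_contr_r_delta[OF cu])
  have ax: "coassociative c" by (rule coalg_coassociative[OF cu])
  have SC: "lin_subspace S" "S \<subseteq> Cset" and AC: "lin_subspace A" "A \<subseteq> Cset"
    using S A by (auto simp: subcoalg_def)
  show "lin_subspace S" "S \<subseteq> Cset" by (fact SC)+
  show "contr_l f (delta c x) \<in> Cset" by (rule contr_l_Cset[OF delta_Cset[OF ax x]])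
  fix g
  obtain s a where sa: "s \<in> S" "a \<in> A" "contr_r (delta c x) g = (\<lambda>i. s i + a i)"
    using contr[of g] by (rule ssumE)
  have C: "s \<in> Cset" "a \<in> Cset" using sa SC AC by auto
  have "contr_r (delta c (contr_l f (delta c x))) g = contr_l f (delta c (contr_r (delta c x) g))"
    by (rule contr_r_delta_contr_l[OF ax x])
  also have "\<dots> = (\<lambda>j. contr_l f (delta c s) j + contr_l f (delta c a) j)"
    unfolding sa(3) delta_add[OF C] by (rule contr_l_add[OF delta_Cset[OF ax C(1)] delta_Cset[OF ax C(2)]])
  also have "\<dots> = contr_l f (delta c s)"
    using contr_l_tens_annihilated[OF subcoalg_delta[OF A sa(2)] AC(1) AC(1) AC(2) f] by simp
  also have "\<dots> \<in> S" by (rule contr_l_tens[OF subcoalg_delta[OF S sa(1)] SC(1) SC(1) SC(2)])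
  finally show "contr_r (delta c (contr_l f (delta c x))) g \<in> S" .
qed

text \<open>The intersection of two subcoalgebras is a subcoalgebra: \<Delta> x lies in
  A \<otimes> A and in S \<otimes> S, hence in (A \<inter> S) \<otimes> (A \<inter> S).\<close>
lemma subcoalg_Int:
  assumes S: "subcoalg c S" and A: "subcoalg c A"
  shows "subcoalg c (S \<inter> A)"
proof -
  have lS: "lin_subspace S" "S \<subseteq> Cset" and lA: "lin_subspace A" "A \<subseteq> Cset"
    using S A by (auto simp: subcoalg_def)
  have "delta c x \<in> tens (S \<inter> A) (S \<inter> A)" if x: "x \<in> S \<inter> A" for x
  proof -
    have tS: "delta c x \<in> tens S S" and tA: "delta c x \<in> tens A A"
      using x S A by (auto simp: subcoalg_def)
    have "delta c x \<in> tens (A \<inter> S) S"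
      using lS lA contr_r_tens[OF tA] by (intro tens_by_contr_r[OF _ _ _ _ _ tS]) auto
    then have "delta c x \<in> tens (A \<inter> S) (A \<inter> S)"
      using lS lA contr_l_tens[OF tA] lsub_Int
      by (intro tens_by_contr_l[where X = A]) (auto intro: subset_trans[of "A \<inter> S" S Cset])
    then show ?thesis by (simp add: Int_commute)
  qed
  then show ?thesis using lsub_Int lS lA by (auto simp: subcoalg_def)
qed

lemma simple_subcoalg_dichotomy:
  assumes "simple_subcoalg c S" "subcoalg c A"
  shows "S \<subseteq> A \<or> S \<inter> A = {zerov}"
  using assms subcoalg_Int[of c S A] by (auto simp: simple_subcoalg_def)

lemma wedge_subset: "wedge c W X Y \<subseteq> W"
  unfolding wedge_def by auto

lemma wedge_mono:
  assumes "X \<subseteq> X'" "Y \<subseteq> Y'"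
  shows "wedge c W X Y \<subseteq> wedge c W X' Y'"
  using ssum_mono[OF tens_mono[OF assms(1) subset_refl] tens_mono[OF subset_refl assms(2)]]
  unfolding wedge_def by blast

lemma lsub_wedge:
  assumes W: "lin_subspace W" "W \<subseteq> Cset"
  shows "lin_subspace (wedge c W X Y)"
proof -
  let ?S = "ssum (tens X W) (tens W Y)"
  have S: "lin_subspace ?S" by (intro lsub_ssum lsub_tens)
  show ?thesis unfolding lin_subspace_def wedge_def
  proof (intro conjI ballI allI)
    show "zerov \<in> {x \<in> W. delta c x \<in> ?S}"
      using lsub_zero[OF W(1)] lsub_zero[OF S] by (simp add: delta_zero)
  next
    fix x y assume x: "x \<in> {x \<in> W. delta c x \<in> ?S}" and y: "y \<in> {x \<in> W. delta c x \<in> ?S}"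
    have "delta c (\<lambda>i. x i + y i) = (\<lambda>q. delta c x q + delta c y q)"
      by (rule delta_add) (use x y W(2) in auto)
    then show "(\<lambda>i. x i + y i) \<in> {x \<in> W. delta c x \<in> ?S}"
      using x y lsub_add[OF W(1)] lsub_add[OF S] by auto
  next
    fix a x assume x: "x \<in> {x \<in> W. delta c x \<in> ?S}"
    have "delta c (\<lambda>i. a * x i) = (\<lambda>q. a * delta c x q)"
      by (rule delta_scale) (use x W(2) in auto)
    then show "(\<lambda>i. a * x i) \<in> {x \<in> W. delta c x \<in> ?S}"
      using x lsub_scale[OF W(1)] lsub_scale[OF S] by auto
  qed
qed

lemma wedge_opp:
  assumes "lin_subspace W" "lin_subspace X" "lin_subspace Y"
  shows "wedge (opp c) W X Y = wedge c W Y X"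
proof -
  have "flip t \<in> ssum (tens X W) (tens W Y) \<longleftrightarrow> t \<in> ssum (tens Y W) (tens W X)" for t
    using flip_ssum[of "flip t" X W W Y] flip_ssum[of t Y W W X] assms
    by (auto simp: ssum_commute)
  then show ?thesis by (simp add: wedge_def delta_opp)
qed

lemma subcoalg_subset_wedge:
  assumes A: "subcoalg c A" and B: "lin_subspace B"
  shows "A \<subseteq> wedge c Cset A B"
proof
  fix x assume x: "x \<in> A"
  have "delta c x \<in> tens A Cset"
    using subcoalg_delta[OF A x] tens_mono[of A A A Cset] A by (auto simp: subcoalg_def)
  then show "x \<in> wedge c Cset A B"
    using x A ssum_contains_left[OF lsub_zero[OF lsub_tens]] by (auto simp: wedge_def subcoalg_def)
qed

lemma subcoalg_subset_wedge_right:
  assumes A: "lin_subspace A" and B: "subcoalg c B"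
  shows "B \<subseteq> wedge c Cset A B"
proof
  fix x assume x: "x \<in> B"
  have "delta c x \<in> tens Cset B"
    using subcoalg_delta[OF B x] tens_mono[of B Cset B B] B by (auto simp: subcoalg_def)
  then show "x \<in> wedge c Cset A B"
    using x B ssum_contains_right[OF lsub_zero[OF lsub_tens]] by (auto simp: wedge_def subcoalg_def)
qed

lemma contr_r_wedge:
  assumes "x \<in> wedge c W A B" "lin_subspace A" "lin_subspace W" "A \<subseteq> Cset" "W \<subseteq> Cset" "B \<subseteq> Cset"
    "annihilates p B"
  shows "contr_r (delta c x) p \<in> A"
  using assms by (intro contr_r_ssum[of _ A W W B]) (auto simp: wedge_def)

lemma contr_l_wedge:
  assumes "x \<in> wedge c W A B" "lin_subspace A" "lin_subspace B" "lin_subspace W"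
    "A \<subseteq> Cset" "W \<subseteq> Cset" "B \<subseteq> Cset" "annihilates p A"
  shows "contr_l p (delta c x) \<in> B"
  using assms by (intro contr_l_ssum[of _ A W W B]) (auto simp: wedge_def)

lemma wedge_in_subcoalg:
  assumes W: "subcoalg c W" and X: "lin_subspace X" "X \<subseteq> W" and Y: "lin_subspace Y" "Y \<subseteq> W"
  shows "wedge c W X Y = wedge c Cset X Y \<inter> W"
proof
  have WC: "lin_subspace W" "W \<subseteq> Cset" using W by (auto simp: subcoalg_def)
  show "wedge c W X Y \<subseteq> wedge c Cset X Y \<inter> W"
  proof
    fix x assume "x \<in> wedge c W X Y"
    then have "x \<in> W" "delta c x \<in> ssum (tens X W) (tens W Y)" by (auto simp: wedge_def)
    moreover have "ssum (tens X W) (tens W Y) \<subseteq> ssum (tens X Cset) (tens Cset Y)"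
      by (intro ssum_mono tens_mono WC(2) subset_refl)
    ultimately show "x \<in> wedge c Cset X Y \<inter> W" using WC by (auto simp: wedge_def)
  qed
  show "wedge c Cset X Y \<inter> W \<subseteq> wedge c W X Y"
  proof
    fix x assume x: "x \<in> wedge c Cset X Y \<inter> W"
    have YC: "Y \<subseteq> Cset" using Y WC by blast
    have "contr_r (delta c x) p \<in> X" if "annihilates p Y" for p
      using x X Y WC that lsub_Cset by (intro contr_r_wedge[of x c Cset X Y]) auto
    then have "delta c x \<in> ssum (tens (X \<inter> W) W) (tens W (Y \<inter> W))"
      using subcoalg_delta[OF W] x
      by (intro tens_annihilator_criterion[OF WC(1) WC(1) X(1) Y(1) WC(2) WC(2) YC]) auto
    moreover have "X \<inter> W = X" "Y \<inter> W = Y" using X Y by auto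
    ultimately show "x \<in> wedge c W X Y" using x by (simp add: wedge_def)
  qed
qed

lemma ssum_subset_wedge:
  assumes S: "subcoalg c S" "S \<subseteq> W" and T: "subcoalg c T" "T \<subseteq> W" and W: "lin_subspace W"
  shows "ssum S T \<subseteq> wedge c W S T"
proof
  fix z assume "z \<in> ssum S T"
  then obtain s t where st: "s \<in> S" "t \<in> T" and z: "z = (\<lambda>i. s i + t i)" by (rule ssumE)
  have C: "s \<in> Cset" "t \<in> Cset" using st S(1) T(1) by (auto simp: subcoalg_def)
  have "delta c s \<in> tens S W"
    using subcoalg_delta[OF S(1) st(1)] tens_mono[OF subset_refl S(2)] by blast
  moreover have "delta c t \<in> tens W T"
    using subcoalg_delta[OF T(1) st(2)] tens_mono[OF T(2) subset_refl] by blast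
  ultimately have "delta c z \<in> ssum (tens S W) (tens W T)"
    unfolding z delta_add[OF C] by (rule ssumI)
  moreover have "z \<in> W" using z st S(2) T(2) lsub_add[OF W] by blast
  ultimately show "z \<in> wedge c W S T" by (simp add: wedge_def)
qed

section \<open>Simple subcoalgebras of a wedge\<close>

locale coalg_pair =
  fixes c :: "'b \<Rightarrow> 'b \<Rightarrow> 'b \<Rightarrow> 'k::field" and u :: "'b \<Rightarrow> 'k" and A B :: "('b \<Rightarrow> 'k) set"
  assumes coalg: "coalg c u" and sub_A: "subcoalg c A" and sub_B: "subcoalg c B"
begin

abbreviation D :: "('b \<Rightarrow> 'k) set" where
  "D \<equiv> wedge c Cset A B"

lemma coassoc: "coassociative c"
  by (rule coalg_coassociative[OF coalg])

lemma spaces: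
  "lin_subspace A" "A \<subseteq> Cset" "lin_subspace B" "B \<subseteq> Cset" "lin_subspace D" "D \<subseteq> Cset"
  using sub_A sub_B lsub_wedge[OF lsub_Cset subset_refl, of c A B] wedge_subset[of c Cset A B]
  by (auto simp: subcoalg_def)

lemma A_subset_D: "A \<subseteq> D"
  using subcoalg_subset_wedge[OF sub_A] spaces by blast

lemma B_subset_D: "B \<subseteq> D"
  using subcoalg_subset_wedge_right[OF _ sub_B] spaces by blast

lemma contr_r_D: "x \<in> D \<Longrightarrow> annihilates p B \<Longrightarrow> contr_r (delta c x) p \<in> A"
  using spaces lsub_Cset by (intro contr_r_wedge[of x c Cset A B]) auto

lemma contr_l_D: "x \<in> D \<Longrightarrow> annihilates p A \<Longrightarrow> contr_l p (delta c x) \<in> B"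
  using spaces lsub_Cset by (intro contr_l_wedge[of x c Cset A B]) auto

lemma D_closed_contr_r:
  assumes x: "x \<in> D"
  shows "contr_r (delta c x) p \<in> D"
proof -
  define y where "y = contr_r (delta c x) p"
  have xC: "x \<in> Cset" using x spaces by blast
  have yC: "y \<in> Cset" unfolding y_def by (rule contr_r_Cset[OF delta_Cset[OF coassoc xC]])
  have "contr_r (delta c y) q \<in> A" if "annihilates q B" for q
    unfolding y_def contr_r_delta_contr_r[OF coassoc xC]
    by (rule contr_r_D[OF x convol_annihilates[OF coassoc sub_B that]])
  then have "delta c y \<in> ssum (tens (A \<inter> Cset) Cset) (tens Cset (B \<inter> Cset))"
    using spaces lsub_Cset Cset_tens_Cset[OF delta_Cset[OF coassoc yC]]
    by (intro tens_annihilator_criterion) auto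
  then show ?thesis using yC spaces by (simp add: y_def wedge_def Int_absorb2)
qed

lemma opposite: "coalg_pair (opp c) u B A"
  using coalg sub_A sub_B by unfold_locales (auto intro: coalg_opp)

lemma D_opp: "wedge (opp c) Cset B A = D"
  using spaces by (intro wedge_opp lsub_Cset) auto

lemma D_closed_contr_l: "x \<in> D \<Longrightarrow> contr_l f (delta c x) \<in> D"
  using coalg_pair.D_closed_contr_r[OF opposite, of x f] by (simp add: D_opp contr_l_delta_opp)

lemma D_subcoalg: "subcoalg c D"
proof -
  have "delta c x \<in> tens D D" if x: "x \<in> D" for x
  proof -
    have xC: "x \<in> Cset" using x spaces by blast
    have "delta c x \<in> tens (D \<inter> Cset) Cset"
      using spaces lsub_Cset D_closed_contr_r[OF x] Cset_tens_Cset[OF delta_Cset[OF coassoc xC]]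
      by (intro tens_by_contr_r) auto
    then have "delta c x \<in> tens D (D \<inter> Cset)"
      using spaces lsub_Cset D_closed_contr_l[OF x] by (intro tens_by_contr_l) (auto simp: Int_absorb2)
    then show ?thesis using spaces by (simp add: Int_absorb2)
  qed
  then show ?thesis using spaces by (simp add: subcoalg_def)
qed

text \<open>Otherwise S meets
  both trivially and the criterion gives \<Delta> x \<in> (A \<inter> S) \<otimes> S + S \<otimes> (B \<inter> S) = 0
  for x \<in> S, so x = 0 by the counit.\<close>
lemma simple_subset_A_or_B:
  assumes S: "simple_subcoalg c S" "S \<subseteq> D"
  shows "S \<subseteq> A \<or> S \<subseteq> B"
proof (rule ccontr)
  assume nab: "\<not> (S \<subseteq> A \<or> S \<subseteq> B)"
  have sS: "subcoalg c S" and nz: "S \<noteq> {zerov}" using S by (auto simp: simple_subcoalg_def)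
  have SC: "lin_subspace S" "S \<subseteq> Cset" using sS by (auto simp: subcoalg_def)
  have "A \<inter> S = {zerov}" "B \<inter> S = {zerov}"
    using simple_subcoalg_dichotomy[OF S(1) sub_A] simple_subcoalg_dichotomy[OF S(1) sub_B] nab by auto
  moreover obtain x where x: "x \<in> S" "x \<noteq> zerov" using nz lsub_zero[OF SC(1)] by blast
  moreover have "delta c x \<in> ssum (tens (A \<inter> S) S) (tens S (B \<inter> S))"
    using spaces SC subcoalg_delta[OF sS x(1)] contr_r_D x S(2)
    by (intro tens_annihilator_criterion) auto
  ultimately have "delta c x \<in> ssum {zerov} {zerov}" by (simp add: tens_zero_left tens_zero_right)
  then have "delta c x = zerov" using ssum_zero_right[OF lsub_zero_space] by blast
  then have "x = zerov" using counit_right[OF coalg, of x] x(1) SC by (auto simp: zerov_def contr_r_def)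
  then show False using x by simp
qed

end

context coalg_pair
begin

lemma wedge_D_inside:
  assumes S: "lin_subspace S" "S \<subseteq> A" and T: "lin_subspace T" "T \<subseteq> B"
  shows "wedge c D S T = wedge c Cset S T"
proof -
  have "wedge c Cset S T \<subseteq> D" by (rule wedge_mono[OF S(2) T(2)])
  moreover have "wedge c D S T = wedge c Cset S T \<inter> D"
    using S T A_subset_D B_subset_D by (intro wedge_in_subcoalg[OF D_subcoalg]) auto
  ultimately show ?thesis by blast
qed

text \<open>An element x of both wedges satisfies (f \<otimes> id) \<Delta> x \<in> T \<inter> B = 0 for f
  annihilating A, hence lies in A.\<close>
lemma wedge_D_left:
  assumes S: "lin_subspace S" "S \<subseteq> A" and T: "lin_subspace T" "T \<subseteq> A" and TB: "T \<inter> B = {zerov}"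
  shows "wedge c D S T = wedge c A S T"
proof -
  have SC: "S \<subseteq> Cset" and TC: "T \<subseteq> Cset" using S T spaces by auto
  have "x \<in> A" if x: "x \<in> wedge c Cset S T" "x \<in> D" for x
  proof (rule mem_by_vanishing_contr_l[OF coalg spaces(1,2)])
    show "x \<in> Cset" using x(2) spaces by blast
    fix f assume f: "annihilates f A"
    then have "annihilates f S" using S(2) by (auto simp: annihilates_def)
    then have "contr_l f (delta c x) \<in> T"
      using x(1) S T SC TC lsub_Cset by (intro contr_l_wedge[of x c Cset S T]) auto
    moreover have "contr_l f (delta c x) \<in> B" by (rule contr_l_D[OF x(2) f])
    ultimately show "contr_l f (delta c x) = zerov" using TB by blast
  qed
  moreover have "wedge c D S T = wedge c Cset S T \<inter> D"
    using S T A_subset_D by (intro wedge_in_subcoalg[OF D_subcoalg]) auto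
  moreover have "wedge c A S T = wedge c Cset S T \<inter> A"
    using S T by (intro wedge_in_subcoalg[OF sub_A]) auto
  ultimately show ?thesis using A_subset_D by blast
qed

lemma wedge_D_right:
  assumes S: "lin_subspace S" "S \<subseteq> B" and T: "lin_subspace T" "T \<subseteq> B" and SA: "S \<inter> A = {zerov}"
  shows "wedge c D S T = wedge c B S T"
proof -
  have "wedge (opp c) D T S = wedge (opp c) B T S"
    using coalg_pair.wedge_D_left[OF opposite T S SA] by (simp add: D_opp)
  then show ?thesis using S T spaces by (simp add: wedge_opp)
qed

text \<open>For x in the wedge, \<Delta> x \<in> ((S + A) \<inter> D) \<otimes> D, so left
  contractions with functionals annihilating A land in S, and those with
  functionals annihilating S land in T; hence \<Delta> x \<in> D \<otimes> ((S + T) \<inter> D).\<close>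
lemma wedge_D_cross:
  assumes S: "subcoalg c S" "S \<subseteq> B" "S \<inter> A = {zerov}"
    and T: "subcoalg c T" "T \<subseteq> A" "T \<inter> B = {zerov}"
  shows "wedge c D S T = ssum S T"
proof
  have SC: "lin_subspace S" "S \<subseteq> Cset" and TC: "lin_subspace T" "T \<subseteq> Cset"
    using S(1) T(1) by (auto simp: subcoalg_def)
  show "ssum S T \<subseteq> wedge c D S T"
    using S T A_subset_D B_subset_D spaces by (intro ssum_subset_wedge) auto
  show "wedge c D S T \<subseteq> ssum S T"
  proof
    fix x assume x: "x \<in> wedge c D S T"
    have xD: "x \<in> D" and xC: "x \<in> Cset" using x wedge_subset spaces by blast+
    have tD: "delta c x \<in> tens D D" by (rule subcoalg_delta[OF D_subcoalg xD])
    have "\<forall>p. annihilates p T \<longrightarrow> contr_r (delta c x) p \<in> S"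
      using x SC TC spaces by (auto intro: contr_r_wedge[of x c D S T])
    moreover have "\<forall>p. annihilates p B \<longrightarrow> contr_r (delta c x) p \<in> A"
      using contr_r_D[OF xD] by blast
    ultimately have "delta c x \<in> ssum (tens (ssum S A \<inter> D) D) (tens D (T \<inter> B \<inter> D))"
      using SC TC spaces tD by (intro tens_annihilator_criterion2) auto
    moreover have "T \<inter> B \<inter> D = {zerov}" using T(3) lsub_zero[OF spaces(5)] by blast
    ultimately have "delta c x \<in> tens (ssum S A \<inter> D) D"
      by (simp add: tens_zero_right ssum_zero_right[OF lsub_tens])
    then have "contr_r (delta c x) g \<in> ssum S A" for g
      using contr_r_tens lsub_Int[OF lsub_ssum[OF SC(1) spaces(1)] spaces(5)] spaces by blast
    then have "\<forall>f. annihilates f A \<longrightarrow> contr_l f (delta c x) \<in> S"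
      using contr_l_delta_in_summand[OF coalg S(1) sub_A xC] by blast
    moreover have "\<forall>f. annihilates f S \<longrightarrow> contr_l f (delta c x) \<in> T"
      using x SC TC spaces by (auto intro: contr_l_wedge[of x c D S T])
    ultimately have "delta c x \<in> ssum (tens D (ssum S T \<inter> D)) (tens (A \<inter> S \<inter> D) D)"
      using SC TC spaces tD by (intro tens_annihilator_criterion2_left) auto
    moreover have "A \<inter> S \<inter> D = {zerov}" using S(3) lsub_zero[OF spaces(5)] by blast
    ultimately have "delta c x \<in> tens D (ssum S T \<inter> D)"
      by (simp add: tens_zero_left ssum_zero_right[OF lsub_tens])
    then have "contr_l u (delta c x) \<in> ssum S T \<inter> D"
      using lsub_Int[OF lsub_ssum[OF SC(1) TC(1)] spaces(5)] spaces
      by (intro contr_l_tens[of _ D]) auto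
    then show "x \<in> ssum S T" using counit_left[OF coalg xC] by simp
  qed
qed

lemma wedge_D_simple:
  assumes S: "simple_subcoalg c S" "S \<subseteq> D" and T: "simple_subcoalg c T" "T \<subseteq> D"
  shows "(\<not> S \<subseteq> A \<and> \<not> T \<subseteq> B \<longrightarrow> wedge c D S T = ssum S T \<and> S \<inter> T = {zerov}) \<and>
    (S \<subseteq> A \<and> T \<subseteq> B \<longrightarrow> wedge c D S T = wedge c Cset S T) \<and>
    (S \<subseteq> A \<and> \<not> T \<subseteq> B \<longrightarrow> wedge c D S T = wedge c A S T) \<and>
    (\<not> S \<subseteq> A \<and> T \<subseteq> B \<longrightarrow> wedge c D S T = wedge c B S T)"
proof -
  have sS: "subcoalg c S" "lin_subspace S" and sT: "subcoalg c T" "lin_subspace T"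
    using S(1) T(1) by (auto simp: simple_subcoalg_def subcoalg_def)
  have not_A: "S \<subseteq> B \<and> S \<inter> A = {zerov}" if "\<not> S \<subseteq> A"
    using that simple_subset_A_or_B[OF S] simple_subcoalg_dichotomy[OF S(1) sub_A] by blast
  have not_B: "T \<subseteq> A \<and> T \<inter> B = {zerov}" if "\<not> T \<subseteq> B"
    using that simple_subset_A_or_B[OF T] simple_subcoalg_dichotomy[OF T(1) sub_B] by blast
  have disjoint: "S \<inter> T = {zerov}" if "\<not> S \<subseteq> A" "\<not> T \<subseteq> B"
    using not_A[OF that(1)] not_B[OF that(2)] lsub_zero[OF sS(2)] lsub_zero[OF sT(2)] by blast
  have "\<not> S \<subseteq> A \<and> \<not> T \<subseteq> B \<longrightarrow> wedge c D S T = ssum S T \<and> S \<inter> T = {zerov}"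
    using not_A not_B disjoint wedge_D_cross[OF sS(1) _ _ sT(1)] by simp
  moreover have "S \<subseteq> A \<and> T \<subseteq> B \<longrightarrow> wedge c D S T = wedge c Cset S T"
    using wedge_D_inside[OF sS(2) _ sT(2)] by simp
  moreover have "S \<subseteq> A \<and> \<not> T \<subseteq> B \<longrightarrow> wedge c D S T = wedge c A S T"
    using not_B wedge_D_left[OF sS(2) _ sT(2)] by simp
  moreover have "\<not> S \<subseteq> A \<and> T \<subseteq> B \<longrightarrow> wedge c D S T = wedge c B S T"
    using not_A wedge_D_right[OF sS(2) _ sT(2)] by simp
  ultimately show ?thesis by (intro conjI)
qed

end

theorem mainTheorem7:
  fixes c :: "'b \<Rightarrow> 'b \<Rightarrow> 'b \<Rightarrow> 'k::field" and u :: "'b \<Rightarrow> 'k"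
    and A B :: "('b \<Rightarrow> 'k) set"
  assumes "coalg c u" and "basic c"
    and "subcoalg c A" and "subcoalg c B"
  shows "(\<forall>S. simple_subcoalg c S \<and> S \<subseteq> wedge c Cset A B \<longrightarrow> S \<subseteq> A \<or> S \<subseteq> B)
    \<and> (\<forall>S T. simple_subcoalg c S \<and> S \<subseteq> wedge c Cset A B
          \<and> simple_subcoalg c T \<and> T \<subseteq> wedge c Cset A B \<longrightarrow>
       (\<not> S \<subseteq> A \<and> \<not> T \<subseteq> B \<longrightarrow>
          wedge c (wedge c Cset A B) S T = ssum S T \<and> S \<inter> T = {zerov}) \<and>
       (S \<subseteq> A \<and> T \<subseteq> B \<longrightarrow>
          wedge c (wedge c Cset A B) S T = wedge c Cset S T) \<and>
       (S \<subseteq> A \<and> \<not> T \<subseteq> B \<longrightarrow>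
          wedge c (wedge c Cset A B) S T = wedge c A S T) \<and>
       (\<not> S \<subseteq> A \<and> T \<subseteq> B \<longrightarrow>
          wedge c (wedge c Cset A B) S T = wedge c B S T))"
proof -
  interpret coalg_pair c u A B
    using assms(1,3,4) by unfold_locales
  show ?thesis
    using simple_subset_A_or_B wedge_D_simple by (intro conjI allI impI) auto
qed

end
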